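(* Let $(H,R)$ be a quasitriangular semisimple Hopf algebra over a field $k$, and let $f_Q:H^*\to H$ be the Drinfeld map. Then $f_Q$ maps every subcoalgebra of $H^*$ to a left coideal of $H$ stable under the left adjoint action of $H$, and maps every Hopf subalgebra of $H^*$ to a normal left coideal subalgebra of $H$.
   Context: Write $R=\sum R^1\otimes R^2$, $Q=R^{21}R=\sum Q^1\otimes Q^2$; the Drinfeld map is $f_Q(p)=\sum\langle p,Q^1\rangle Q^2$ for $p\in H^*$. The left adjoint action is $h\cdot a=\sum h_1aS(h_2)$. A left coideal subalgebra is normal if it is stable under the left adjoint action. *)

theory Defs
  imports Main
begin

text \<open>A finite-dimensional algebra over a field 'a is presented by a basis indexed
  by a finite type 'i; elements are coordinate vectors 'i => 'a, elements of H (x) H are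
  coefficient matrices 'i => 'i => 'a (coefficient of e_i (x) e_j), and H^* is
  identified with 'i => 'a via the dual basis.\<close>

record ('i, 'a) hopf_data =
  mu  :: "'i \<Rightarrow> 'i \<Rightarrow> 'i \<Rightarrow> 'a"   (* e_i e_j = sum_l mu i j l e_l *)
  one :: "'i \<Rightarrow> 'a"
  dl  :: "'i \<Rightarrow> 'i \<Rightarrow> 'i \<Rightarrow> 'a"   (* Delta e_l = sum_{i,j} dl l i j e_i (x) e_j *)
  ep  :: "'i \<Rightarrow> 'a"
  ant :: "'i \<Rightarrow> 'i \<Rightarrow> 'a"           (* S e_i = sum_j ant i j e_j *)

definition vzero :: "'i \<Rightarrow> 'a::field" where "vzero = (\<lambda>_. 0)"
definition vadd :: "('i \<Rightarrow> 'a::field) \<Rightarrow> ('i \<Rightarrow> 'a) \<Rightarrow> 'i \<Rightarrow> 'a" where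
  "vadd x y = (\<lambda>i. x i + y i)"
definition vsmult :: "'a::field \<Rightarrow> ('i \<Rightarrow> 'a) \<Rightarrow> 'i \<Rightarrow> 'a" where
  "vsmult c x = (\<lambda>i. c * x i)"
definition bvec :: "'i \<Rightarrow> 'i \<Rightarrow> 'a::field" where
  "bvec i = (\<lambda>k. if k = i then 1 else 0)"

definition subspace :: "('i \<Rightarrow> 'a::field) set \<Rightarrow> bool" where
  "subspace V \<longleftrightarrow> vzero \<in> V \<and> (\<forall>x\<in>V. \<forall>y\<in>V. vadd x y \<in> V) \<and> (\<forall>c. \<forall>x\<in>V. vsmult c x \<in> V)"

definition in_tensor :: "('i \<Rightarrow> 'a::field) set \<Rightarrow> ('i \<Rightarrow> 'a) set \<Rightarrow> ('i \<Rightarrow> 'i \<Rightarrow> 'a) \<Rightarrow> bool" where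
  "in_tensor V W T \<longleftrightarrow> (\<exists>ps. set ps \<subseteq> V \<times> W \<and> T = (\<lambda>i j. \<Sum>(v, w)\<leftarrow>ps. v i * w j))"

definition hmul :: "('i::finite, 'a::field) hopf_data \<Rightarrow> ('i \<Rightarrow> 'a) \<Rightarrow> ('i \<Rightarrow> 'a) \<Rightarrow> 'i \<Rightarrow> 'a" where
  "hmul H x y = (\<lambda>l. \<Sum>i\<in>UNIV. \<Sum>j\<in>UNIV. x i * y j * mu H i j l)"
definition hcomul :: "('i::finite, 'a::field) hopf_data \<Rightarrow> ('i \<Rightarrow> 'a) \<Rightarrow> 'i \<Rightarrow> 'i \<Rightarrow> 'a" where
  "hcomul H x = (\<lambda>i j. \<Sum>l\<in>UNIV. x l * dl H l i j)"
definition hcounit :: "('i::finite, 'a::field) hopf_data \<Rightarrow> ('i \<Rightarrow> 'a) \<Rightarrow> 'a" where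
  "hcounit H x = (\<Sum>l\<in>UNIV. x l * ep H l)"
definition hS :: "('i::finite, 'a::field) hopf_data \<Rightarrow> ('i \<Rightarrow> 'a) \<Rightarrow> 'i \<Rightarrow> 'a" where
  "hS H x = (\<lambda>j. \<Sum>i\<in>UNIV. x i * ant H i j)"

definition mult_map :: "('i::finite, 'a::field) hopf_data \<Rightarrow> ('i \<Rightarrow> 'i \<Rightarrow> 'a) \<Rightarrow> 'i \<Rightarrow> 'a" where
  "mult_map H T = (\<lambda>l. \<Sum>i\<in>UNIV. \<Sum>j\<in>UNIV. T i j * mu H i j l)"
definition tmul :: "('i::finite, 'a::field) hopf_data \<Rightarrow> ('i \<Rightarrow> 'i \<Rightarrow> 'a) \<Rightarrow> ('i \<Rightarrow> 'i \<Rightarrow> 'a) \<Rightarrow> 'i \<Rightarrow> 'i \<Rightarrow> 'a" where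
  "tmul H T U = (\<lambda>i j. \<Sum>a\<in>UNIV. \<Sum>b\<in>UNIV. \<Sum>c\<in>UNIV. \<Sum>d\<in>UNIV.
      T a b * U c d * mu H a c i * mu H b d j)"
definition tone :: "('i::finite, 'a::field) hopf_data \<Rightarrow> 'i \<Rightarrow> 'i \<Rightarrow> 'a" where
  "tone H = (\<lambda>i j. one H i * one H j)"
definition t3mul :: "('i::finite, 'a::field) hopf_data \<Rightarrow> ('i \<Rightarrow> 'i \<Rightarrow> 'i \<Rightarrow> 'a) \<Rightarrow> ('i \<Rightarrow> 'i \<Rightarrow> 'i \<Rightarrow> 'a) \<Rightarrow> 'i \<Rightarrow> 'i \<Rightarrow> 'i \<Rightarrow> 'a" where
  "t3mul H T U = (\<lambda>i j k. \<Sum>a\<in>UNIV. \<Sum>b\<in>UNIV. \<Sum>c\<in>UNIV. \<Sum>a'\<in>UNIV. \<Sum>b'\<in>UNIV. \<Sum>c'\<in>UNIV.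
      T a b c * U a' b' c' * mu H a a' i * mu H b b' j * mu H c c' k)"

definition hopf_algebra :: "('i::finite, 'a::field) hopf_data \<Rightarrow> bool" where
  "hopf_algebra H \<longleftrightarrow>
     (\<forall>x y z. hmul H (hmul H x y) z = hmul H x (hmul H y z)) \<and>
     (\<forall>x. hmul H (one H) x = x \<and> hmul H x (one H) = x) \<and>
     (\<forall>x i j k. (\<Sum>m\<in>UNIV. hcomul H x m k * dl H m i j) = (\<Sum>m\<in>UNIV. hcomul H x i m * dl H m j k)) \<and>
     (\<forall>x j. (\<Sum>i\<in>UNIV. ep H i * hcomul H x i j) = x j) \<and>
     (\<forall>x i. (\<Sum>j\<in>UNIV. hcomul H x i j * ep H j) = x i) \<and>
     (\<forall>x y. hcomul H (hmul H x y) = tmul H (hcomul H x) (hcomul H y)) \<and>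
     hcomul H (one H) = tone H \<and>
     (\<forall>x y. hcounit H (hmul H x y) = hcounit H x * hcounit H y) \<and>
     hcounit H (one H) = 1 \<and>
     (\<forall>x. mult_map H (\<lambda>a b. \<Sum>i\<in>UNIV. hcomul H x i b * ant H i a) = vsmult (hcounit H x) (one H)) \<and>
     (\<forall>x. mult_map H (\<lambda>a b. \<Sum>j\<in>UNIV. hcomul H x a j * ant H j b) = vsmult (hcounit H x) (one H))"

definition left_ideal :: "('i::finite, 'a::field) hopf_data \<Rightarrow> ('i \<Rightarrow> 'a) set \<Rightarrow> bool" where
  "left_ideal H L \<longleftrightarrow> subspace L \<and> (\<forall>h. \<forall>x\<in>L. hmul H h x \<in> L)"
definition semisimple :: "('i::finite, 'a::field) hopf_data \<Rightarrow> bool" where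
  "semisimple H \<longleftrightarrow> (\<forall>L. left_ideal H L \<longrightarrow>
      (\<exists>L'. left_ideal H L' \<and> L \<inter> L' = {vzero} \<and> (\<forall>x. \<exists>a\<in>L. \<exists>b\<in>L'. x = vadd a b)))"

definition quasitriangular :: "('i::finite, 'a::field) hopf_data \<Rightarrow> ('i \<Rightarrow> 'i \<Rightarrow> 'a) \<Rightarrow> bool" where
  "quasitriangular H R \<longleftrightarrow>
     (\<exists>Ri. tmul H R Ri = tone H \<and> tmul H Ri R = tone H) \<and>
     (\<forall>x. tmul H (\<lambda>i j. hcomul H x j i) R = tmul H R (hcomul H x)) \<and>
     (\<lambda>i j k. \<Sum>m\<in>UNIV. R m k * dl H m i j) =
        t3mul H (\<lambda>i j k. R i k * one H j) (\<lambda>i j k. one H i * R j k) \<and>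
     (\<lambda>i j k. \<Sum>m\<in>UNIV. R i m * dl H m j k) =
        t3mul H (\<lambda>i j k. R i k * one H j) (\<lambda>i j k. R i j * one H k)"

definition dcomul :: "('i::finite, 'a::field) hopf_data \<Rightarrow> ('i \<Rightarrow> 'a) \<Rightarrow> 'i \<Rightarrow> 'i \<Rightarrow> 'a" where
  "dcomul H p = (\<lambda>i j. \<Sum>l\<in>UNIV. p l * mu H i j l)"
definition dmul :: "('i::finite, 'a::field) hopf_data \<Rightarrow> ('i \<Rightarrow> 'a) \<Rightarrow> ('i \<Rightarrow> 'a) \<Rightarrow> 'i \<Rightarrow> 'a" where
  "dmul H p q = (\<lambda>l. \<Sum>i\<in>UNIV. \<Sum>j\<in>UNIV. p i * q j * dl H l i j)"
definition dS :: "('i::finite, 'a::field) hopf_data \<Rightarrow> ('i \<Rightarrow> 'a) \<Rightarrow> 'i \<Rightarrow> 'a" where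
  "dS H p = (\<lambda>i. \<Sum>j\<in>UNIV. ant H i j * p j)"

definition subcoalgebra_dual :: "('i::finite, 'a::field) hopf_data \<Rightarrow> ('i \<Rightarrow> 'a) set \<Rightarrow> bool" where
  "subcoalgebra_dual H C \<longleftrightarrow> subspace C \<and> (\<forall>p\<in>C. in_tensor C C (dcomul H p))"
definition hopf_subalgebra_dual :: "('i::finite, 'a::field) hopf_data \<Rightarrow> ('i \<Rightarrow> 'a) set \<Rightarrow> bool" where
  "hopf_subalgebra_dual H A \<longleftrightarrow> subcoalgebra_dual H A \<and> ep H \<in> A \<and>
     (\<forall>p\<in>A. \<forall>q\<in>A. dmul H p q \<in> A) \<and> (\<forall>p\<in>A. dS H p \<in> A)"

definition left_coideal :: "('i::finite, 'a::field) hopf_data \<Rightarrow> ('i \<Rightarrow> 'a) set \<Rightarrow> bool" where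
  "left_coideal H L \<longleftrightarrow> subspace L \<and> (\<forall>x\<in>L. in_tensor UNIV L (hcomul H x))"
definition ad :: "('i::finite, 'a::field) hopf_data \<Rightarrow> ('i \<Rightarrow> 'a) \<Rightarrow> ('i \<Rightarrow> 'a) \<Rightarrow> 'i \<Rightarrow> 'a" where
  "ad H h a = (\<lambda>l. \<Sum>i\<in>UNIV. \<Sum>j\<in>UNIV.
      hcomul H h i j * hmul H (hmul H (bvec i) a) (hS H (bvec j)) l)"
definition ad_stable :: "('i::finite, 'a::field) hopf_data \<Rightarrow> ('i \<Rightarrow> 'a) set \<Rightarrow> bool" where
  "ad_stable H L \<longleftrightarrow> (\<forall>h. \<forall>a\<in>L. ad H h a \<in> L)"
definition left_coideal_subalgebra :: "('i::finite, 'a::field) hopf_data \<Rightarrow> ('i \<Rightarrow> 'a) set \<Rightarrow> bool" where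
  "left_coideal_subalgebra H L \<longleftrightarrow> left_coideal H L \<and> one H \<in> L \<and> (\<forall>x\<in>L. \<forall>y\<in>L. hmul H x y \<in> L)"
definition normal_lcs :: "('i::finite, 'a::field) hopf_data \<Rightarrow> ('i \<Rightarrow> 'a) set \<Rightarrow> bool" where
  "normal_lcs H L \<longleftrightarrow> left_coideal_subalgebra H L \<and> ad_stable H L"

definition Qel :: "('i::finite, 'a::field) hopf_data \<Rightarrow> ('i \<Rightarrow> 'i \<Rightarrow> 'a) \<Rightarrow> 'i \<Rightarrow> 'i \<Rightarrow> 'a" where
  "Qel H R = tmul H (\<lambda>i j. R j i) R"
definition drinfeld :: "('i::finite, 'a::field) hopf_data \<Rightarrow> ('i \<Rightarrow> 'i \<Rightarrow> 'a) \<Rightarrow> ('i \<Rightarrow> 'a) \<Rightarrow> 'i \<Rightarrow> 'a" where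
  "drinfeld H R p = (\<lambda>j. \<Sum>i\<in>UNIV. p i * Qel H R i j)"

end

theory Submission
  imports Defs
begin

text \<open>
  Write \<open>Q = R\<^sub>2\<^sub>1 R\<close> and \<open>R = \<Sum> R\<^sup>1 \<otimes> R\<^sup>2 = \<Sum> r\<^sup>1 \<otimes> r\<^sup>2\<close>. Three properties of \<open>f\<^sub>Q\<close> carry the proof.
  (1) Since \<open>Q\<close> commutes with \<open>\<Delta>(H)\<close>, \<open>f\<^sub>Q\<close> intertwines the coadjoint action
  \<open>(h \<rightharpoonup> p)(x) = p(S(h\<^sub>1) x h\<^sub>2)\<close> with the left adjoint action: \<open>h \<cdot> f\<^sub>Q(p) = f\<^sub>Q(h \<rightharpoonup> p)\<close>.
  (2) By \<open>(\<Delta> \<otimes> id) R = R\<^sub>1\<^sub>3 R\<^sub>2\<^sub>3\<close> and \<open>(id \<otimes> \<Delta>) R = R\<^sub>1\<^sub>3 R\<^sub>1\<^sub>2\<close>, each row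
  \<open>(e\<^sub>k\<^sup>* \<otimes> id) \<Delta>(f\<^sub>Q(p))\<close> is again a value of \<open>f\<^sub>Q\<close>, at a combination of two-sided
  translates \<open>p(x \<cdot> y)\<close> of \<open>p\<close>.
  (3) \<open>f\<^sub>Q(p q) = \<Sum> q(R\<^sup>2 r\<^sup>1) R\<^sup>1 f\<^sub>Q(p) r\<^sup>2\<close>, and \<open>f\<^sub>Q(q) y\<close> is the sum of the same
  expressions with \<open>R\<^sup>2 \<cdot> y\<close> in place of \<open>f\<^sub>Q(p)\<close> and the translate \<open>q(\<cdot> R\<^sup>1)\<close> in place of \<open>q\<close>.

  A subcoalgebra of \<open>H\<^sup>*\<close> is closed under two-sided translation, so by (1) and (2) its image is
  an ad-stable left coideal. For a Hopf subalgebra \<open>A\<close> moreover \<open>f\<^sub>Q(\<epsilon>) = 1\<close>, and by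
  ad-stability and (3) a product \<open>f\<^sub>Q(q) f\<^sub>Q(p)\<close> with \<open>p, q \<in> A\<close> is \<open>f\<^sub>Q\<close> of a sum of
  products of elements of \<open>A\<close>.
\<close>

lemma if_zero_mult [simp]: "(if P then a else 0) * (y::'a::field) = (if P then a * y else 0)"
  by simp

lemma mult_if_zero [simp]: "(y::'a::field) * (if P then a else 0) = (if P then y * a else 0)"
  by simp

lemma sum_if_zero [simp]:
  "(\<Sum>j\<in>A. if P then f j else (0::'a::comm_monoid_add)) = (if P then (\<Sum>j\<in>A. f j) else 0)"
  by simp

section \<open>Coordinate pairings\<close>

text \<open>
  Every identity between elements of \<open>H\<close> below is proved by pairing both sides with an
  arbitrary \<open>\<phi>\<close> (\<open>dpair_ext\<close>) and rewriting the resulting nested pairings with the axioms.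
\<close>

definition dpair :: "('i::finite \<Rightarrow> 'a::field) \<Rightarrow> ('i \<Rightarrow> 'a) \<Rightarrow> 'a" where
  "dpair x F = (\<Sum>i\<in>UNIV. x i * F i)"

definition dpair2 :: "('i::finite \<Rightarrow> 'i \<Rightarrow> 'a::field) \<Rightarrow> ('i \<Rightarrow> 'i \<Rightarrow> 'a) \<Rightarrow> 'a" where
  "dpair2 T F = (\<Sum>i\<in>UNIV. \<Sum>j\<in>UNIV. T i j * F i j)"

definition dpair3 :: "('i::finite \<Rightarrow> 'i \<Rightarrow> 'i \<Rightarrow> 'a::field) \<Rightarrow> ('i \<Rightarrow> 'i \<Rightarrow> 'i \<Rightarrow> 'a) \<Rightarrow> 'a" where
  "dpair3 T F = (\<Sum>i\<in>UNIV. \<Sum>j\<in>UNIV. \<Sum>k\<in>UNIV. T i j k * F i j k)"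

lemma dpair_bvec_left[simp]: "dpair (bvec a) F = F a"
  by (simp add: dpair_def bvec_def)

lemma dpair_bvec_right[simp]: "dpair x (bvec l) = x l"
  by (simp add: dpair_def bvec_def)

lemma dpair_ext: "(\<And>\<phi>. dpair x \<phi> = dpair y \<phi>) \<Longrightarrow> x = y"
  by (metis dpair_bvec_right ext)

lemma dpair_const_mult: "dpair x (\<lambda>i. c * F i) = c * dpair x F"
  unfolding dpair_def sum_distrib_left by (simp add: mult_ac)

lemma dpair_mult_const: "dpair x (\<lambda>i. F i * c) = dpair x F * c"
  unfolding dpair_def sum_distrib_right by (simp add: mult_ac)

lemma dpair2_const_mult: "dpair2 T (\<lambda>i j. c * F i j) = c * dpair2 T F"
  unfolding dpair2_def sum_distrib_left by (simp add: mult_ac)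

lemma dpair2_mult_const: "dpair2 T (\<lambda>i j. F i j * c) = dpair2 T F * c"
  unfolding dpair2_def sum_distrib_right by (simp add: mult_ac)

lemma dpair2_as_sum_prod: "dpair2 T F = (\<Sum>p\<in>UNIV. T (fst p) (snd p) * F (fst p) (snd p))"
  unfolding dpair2_def sum.cartesian_product UNIV_Times_UNIV[symmetric] by (simp add: case_prod_beta)

lemma dpair3_as_sum_prod: "dpair3 T F = (\<Sum>p\<in>UNIV. T (fst p) (fst (snd p)) (snd (snd p)) * F (fst p) (fst (snd p)) (snd (snd p)))"
  unfolding dpair3_def sum.cartesian_product UNIV_Times_UNIV[symmetric] by (simp add: case_prod_beta)

lemma dpair_swap: "dpair x (\<lambda>i. dpair y (\<lambda>j. F i j)) = dpair y (\<lambda>j. dpair x (\<lambda>i. F i j))"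
  unfolding dpair_def by (simp add: sum_distrib_left mult_ac) (rule sum.swap)

lemma dpair2_swap: "dpair2 T (\<lambda>i j. dpair2 U (\<lambda>k l. F i j k l)) = dpair2 U (\<lambda>k l. dpair2 T (\<lambda>i j. F i j k l))"
  unfolding dpair2_as_sum_prod by (simp add: sum_distrib_left mult_ac) (rule sum.swap)

lemma dpair_dpair2_swap: "dpair x (\<lambda>i. dpair2 U (\<lambda>k l. F i k l)) = dpair2 U (\<lambda>k l. dpair x (\<lambda>i. F i k l))"
  unfolding dpair2_as_sum_prod dpair_def by (simp add: sum_distrib_left mult_ac) (rule sum.swap)

lemma dpair2_flip: "dpair2 (\<lambda>i j. T j i) \<Phi> = dpair2 T (\<lambda>j i. \<Phi> i j)"
  unfolding dpair2_def by (rule sum.swap)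

lemma dpair_sum_left: "dpair (\<lambda>l. \<Sum>c\<in>UNIV. F c l) \<phi> = (\<Sum>c\<in>UNIV. dpair (F c) \<phi>)"
  unfolding dpair_def sum_distrib_right by (rule sum.swap)

lemma sum_dpair_eq_dpair2: "(\<Sum>c\<in>UNIV. dpair (T c) (\<lambda>w. G c w)) = dpair2 T G"
  unfolding dpair_def dpair2_def ..

lemma dpair_sum_list_right: "dpair u (\<lambda>z. \<Sum>q\<leftarrow>ps. F q z) = (\<Sum>q\<leftarrow>ps. dpair u (F q))"
  by (induction ps) (simp_all add: dpair_def sum.distrib distrib_left)

lemma dpair_scale_left: "dpair (\<lambda>l. c * x l) \<phi> = c * dpair x \<phi>"
  unfolding dpair_def by (simp add: sum_distrib_left mult_ac)

lemma dpair_lincomb_left: "dpair (\<lambda>l. dpair x (\<lambda>i. F i l)) \<phi> = dpair x (\<lambda>i. dpair (F i) \<phi>)"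
  unfolding dpair_def by (simp add: sum_distrib_left sum_distrib_right mult_ac) (rule sum.swap)

lemma dpair_lincomb2_left: "dpair (\<lambda>l. dpair2 T (\<lambda>i j. F i j l)) \<phi> = dpair2 T (\<lambda>i j. dpair (F i j) \<phi>)"
  unfolding dpair_def dpair2_as_sum_prod by (simp add: sum_distrib_left sum_distrib_right mult_ac) (rule sum.swap)

lemma dpair2_lincomb_left: "dpair2 (\<lambda>i j. dpair x (\<lambda>l. F l i j)) \<Phi> = dpair x (\<lambda>l. dpair2 (F l) \<Phi>)"
  unfolding dpair_def dpair2_as_sum_prod sum_distrib_left sum_distrib_right by (simp add: mult_ac) (rule sum.swap)

lemma dpair2_lincomb2_left: "dpair2 (\<lambda>i j. dpair2 T (\<lambda>a b. F a b i j)) \<Phi> = dpair2 T (\<lambda>a b. dpair2 (F a b) \<Phi>)"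
  unfolding dpair2_as_sum_prod sum_distrib_left sum_distrib_right by (simp add: mult_ac) (rule sum.swap)

lemma dpair3_lincomb2_left: "dpair3 (\<lambda>i j k. dpair2 T (\<lambda>a b. F a b i j k)) \<Psi> = dpair2 T (\<lambda>a b. dpair3 (F a b) \<Psi>)"
  unfolding dpair3_as_sum_prod dpair2_as_sum_prod sum_distrib_left sum_distrib_right by (simp add: mult_ac) (rule sum.swap)

lemma dpair3_lincomb3_left: "dpair3 (\<lambda>i j k. dpair3 T (\<lambda>a b c. F a b c i j k)) \<Psi> = dpair3 T (\<lambda>a b c. dpair3 (F a b c) \<Psi>)"
  unfolding dpair3_as_sum_prod sum_distrib_left sum_distrib_right by (simp add: mult_ac) (rule sum.swap)

lemma dpair2_tensor: "dpair2 (\<lambda>i j. x i * y j) \<Phi> = dpair x (\<lambda>i. dpair y (\<lambda>j. \<Phi> i j))"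
  unfolding dpair_def dpair2_def sum_distrib_left by (simp add: mult_ac)

lemma dpair3_tensor: "dpair3 (\<lambda>i j k. x i * y j * z k) \<Psi> = dpair x (\<lambda>i. dpair y (\<lambda>j. dpair z (\<lambda>k. \<Psi> i j k)))"
  unfolding dpair_def dpair3_def sum_distrib_left by (simp add: mult_ac)

lemma dpair3_tensor_2_1: "dpair3 (\<lambda>i j k. M i j * x k) \<Psi> = dpair2 M (\<lambda>i j. dpair x (\<lambda>k. \<Psi> i j k))"
  unfolding dpair3_def dpair2_def dpair_def sum_distrib_left by (simp add: mult_ac)

lemma dpair3_tensor_1_2: "dpair3 (\<lambda>i j k. x i * M j k) \<Psi> = dpair x (\<lambda>i. dpair2 M (\<lambda>j k. \<Psi> i j k))"
  unfolding dpair3_def dpair2_def dpair_def sum_distrib_left by (simp add: mult_ac)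

lemma dpair3_tensor_13_2: "dpair3 (\<lambda>i j k. M i k * x j) \<Psi> = dpair2 M (\<lambda>i k. dpair x (\<lambda>j. \<Psi> i j k))"
proof -
  have "dpair3 (\<lambda>i j k. M i k * x j) \<Psi> = (\<Sum>i\<in>UNIV. \<Sum>j\<in>UNIV. \<Sum>k\<in>UNIV. M i k * (x j * \<Psi> i j k))"
    unfolding dpair3_def by (simp add: mult_ac)
  also have "\<dots> = (\<Sum>i\<in>UNIV. \<Sum>k\<in>UNIV. \<Sum>j\<in>UNIV. M i k * (x j * \<Psi> i j k))"
    by (rule sum.cong[OF refl], rule sum.swap)
  finally show ?thesis unfolding dpair2_def dpair_def sum_distrib_left .
qed

lemma dpair3_compose_left: "dpair3 (\<lambda>i j k. \<Sum>m\<in>UNIV. X m k * D m i j) \<Psi> = dpair2 X (\<lambda>m k. dpair2 (D m) (\<lambda>i j. \<Psi> i j k))"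
proof -
  have "(\<lambda>i j k. \<Sum>m\<in>UNIV. X m k * D m i j) = (\<lambda>i j k. dpair2 X (\<lambda>m k'. D m i j * bvec k' k))"
    unfolding dpair2_def bvec_def by (simp add: mult_ac)
  then show ?thesis by (simp add: dpair3_lincomb2_left dpair3_tensor_2_1)
qed

lemma dpair3_compose_right: "dpair3 (\<lambda>i j k. \<Sum>m\<in>UNIV. X i m * D m j k) \<Psi> = dpair2 X (\<lambda>i m. dpair2 (D m) (\<lambda>j k. \<Psi> i j k))"
proof -
  have "(\<lambda>i j k. \<Sum>m\<in>UNIV. X i m * D m j k) = (\<lambda>i j k. dpair2 X (\<lambda>i' m. bvec i' i * D m j k))"
    unfolding dpair2_def bvec_def by (simp add: mult_ac)
  then show ?thesis by (simp add: dpair3_lincomb2_left dpair3_tensor_1_2)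
qed

lemma dpair_dpair_product: "dpair x (\<lambda>i. dpair y (\<lambda>j. F i * G j)) = dpair x F * dpair y G"
proof -
  have "dpair x F * dpair y G = dpair x (\<lambda>i. F i * dpair y G)" by (rule dpair_mult_const[symmetric])
  also have "\<dots> = dpair x (\<lambda>i. dpair y (\<lambda>j. F i * G j))" by (simp only: dpair_const_mult[symmetric])
  finally show ?thesis ..
qed

lemma dpair_dpair_product_const: "dpair x (\<lambda>i. dpair y (\<lambda>j. F i * G j * c)) = dpair x F * dpair y G * c"
  by (simp only: dpair_mult_const dpair_dpair_product[symmetric])

lemma dpair_dpair_product_nested: "dpair x (\<lambda>i. dpair v (\<lambda>z. dpair (w z) (\<lambda>j. F i * G j))) = dpair x F * dpair v (\<lambda>z. dpair (w z) G)"
proof -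
  have "dpair x F * dpair v (\<lambda>z. dpair (w z) G) = dpair x (\<lambda>i. F i * dpair v (\<lambda>z. dpair (w z) G))" by (rule dpair_mult_const[symmetric])
  also have "\<dots> = dpair x (\<lambda>i. dpair v (\<lambda>z. dpair (w z) (\<lambda>j. F i * G j)))" by (simp only: dpair_const_mult[symmetric])
  finally show ?thesis ..
qed

lemma dpair_dpair_product_swap: "dpair u (\<lambda>i. dpair v (\<lambda>j. F j * G i)) = dpair v F * dpair u G"
proof -
  have "dpair u (\<lambda>i. dpair v (\<lambda>j. F j * G i)) = dpair v (\<lambda>j. dpair u (\<lambda>i. F j * G i))" by (rule dpair_swap)
  also have "\<dots> = dpair v F * dpair u G" by (rule dpair_dpair_product)
  finally show ?thesis .
qed

lemma dpair_row: "dpair (\<lambda>j. T k j) \<phi> = dpair2 T (\<lambda>x y. bvec k x * \<phi> y)"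
  unfolding dpair_def dpair2_def bvec_def by (simp add: mult_ac)

lemma hmul_eq_dpair: "hmul H x y = (\<lambda>l. dpair x (\<lambda>i. dpair y (\<lambda>j. mu H i j l)))"
  unfolding hmul_def dpair_def sum_distrib_left by (simp add: mult_ac)

lemma hS_eq_dpair: "hS H x = (\<lambda>j. dpair x (\<lambda>i. ant H i j))"
  unfolding hS_def dpair_def by (simp add: mult_ac)

lemma hcomul_eq_dpair: "hcomul H x = (\<lambda>i j. dpair x (\<lambda>l. dl H l i j))"
  unfolding hcomul_def dpair_def by (simp add: mult_ac)

lemma tmul_eq_dpair2: "tmul H T U = (\<lambda>i j. dpair2 T (\<lambda>a b. dpair2 U (\<lambda>c d. mu H a c i * mu H b d j)))"
  unfolding tmul_def dpair2_def sum_distrib_left by (simp add: mult_ac)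

lemma t3mul_eq_dpair3: "t3mul H T U = (\<lambda>i j k. dpair3 T (\<lambda>a b c. dpair3 U (\<lambda>a' b' c'. mu H a a' i * mu H b b' j * mu H c c' k)))"
  unfolding t3mul_def dpair3_def sum_distrib_left by (simp add: mult_ac)

lemma dpair_hmul: "dpair (hmul H x y) \<phi> = dpair x (\<lambda>a. dpair y (\<lambda>b. dpair (mu H a b) \<phi>))"
  unfolding hmul_eq_dpair by (simp add: dpair_lincomb_left)

lemma dpair_hS: "dpair (hS H x) \<phi> = dpair x (\<lambda>i. dpair (ant H i) \<phi>)"
  unfolding hS_eq_dpair by (simp add: dpair_lincomb_left)

lemma dpair2_hcomul: "dpair2 (hcomul H x) \<Phi> = dpair x (\<lambda>l. dpair2 (dl H l) \<Phi>)"
  unfolding hcomul_eq_dpair by (simp add: dpair2_lincomb_left)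

lemma dpair2_tmul: "dpair2 (tmul H T U) \<Phi> = dpair2 T (\<lambda>a b. dpair2 U (\<lambda>c d. dpair (mu H a c) (\<lambda>i. dpair (mu H b d) (\<lambda>j. \<Phi> i j))))"
  unfolding tmul_eq_dpair2 by (simp add: dpair2_lincomb2_left dpair2_tensor)

lemma dpair3_t3mul: "dpair3 (t3mul H T U) \<Psi> = dpair3 T (\<lambda>a b c. dpair3 U (\<lambda>a' b' c'. dpair (mu H a a') (\<lambda>i. dpair (mu H b b') (\<lambda>j. dpair (mu H c c') (\<lambda>k. \<Psi> i j k)))))"
  unfolding t3mul_eq_dpair3 by (simp add: dpair3_lincomb3_left dpair3_tensor)

lemma dpair_vsmult: "dpair (vsmult c x) \<phi> = c * dpair x \<phi>"
  unfolding vsmult_def by (rule dpair_scale_left)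

lemma hcounit_eq_dpair: "hcounit H x = dpair x (ep H)"
  unfolding hcounit_def dpair_def ..

lemma dpair_mult_map: "dpair (mult_map H T) \<phi> = dpair2 T (\<lambda>i j. dpair (mu H i j) \<phi>)"
proof -
  have "mult_map H T = (\<lambda>l. dpair2 T (\<lambda>i j. mu H i j l))" unfolding mult_map_def dpair2_def by simp
  then show ?thesis by (simp add: dpair_lincomb2_left)
qed

lemma dmul_eq_dpair2: "dmul H p q = (\<lambda>l. dpair2 (dl H l) (\<lambda>x y. p x * q y))"
  unfolding dmul_def dpair2_def by (simp add: mult_ac)

lemma dcomul_eq_dpair: "dcomul H p i j = dpair (mu H i j) p"
  unfolding dcomul_def dpair_def by (simp add: mult_ac)

lemma dpair_ad: "dpair (ad H h y) \<phi> = dpair h (\<lambda>w. dpair2 (dl H w) (\<lambda>i j. dpair y (\<lambda>k. dpair (mu H i k) (\<lambda>m. dpair (ant H j) (\<lambda>n. dpair (mu H m n) \<phi>)))))"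
proof -
  have "ad H h y = (\<lambda>l. dpair2 (hcomul H h) (\<lambda>i j. hmul H (hmul H (bvec i) y) (hS H (bvec j)) l))"
    unfolding ad_def dpair2_def ..
  then have "dpair (ad H h y) \<phi> = dpair2 (hcomul H h) (\<lambda>i j. dpair (hmul H (hmul H (bvec i) y) (hS H (bvec j))) \<phi>)"
    by (simp only: dpair_lincomb2_left)
  then show ?thesis by (simp only: dpair2_hcomul dpair_hmul dpair_hS dpair_bvec_left)
qed

section \<open>Subspaces, tensors and subcoalgebras\<close>

lemma sum_list_lincomb_mem:
  assumes V: "subspace V" and g: "\<forall>z\<in>set zs. g z \<in> V"
  shows "(\<lambda>m. \<Sum>z\<leftarrow>zs. c z * g z m) \<in> V"
  using g
proof (induction zs)
  case Nil
  then show ?case using V unfolding subspace_def vzero_def by simp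
next
  case (Cons z zs)
  then have "(\<lambda>m. \<Sum>z\<leftarrow>zs. c z * g z m) \<in> V" "g z \<in> V" by auto
  then have "vadd (vsmult (c z) (g z)) (\<lambda>m. \<Sum>z\<leftarrow>zs. c z * g z m) \<in> V"
    using V unfolding subspace_def by blast
  then show ?case unfolding vadd_def vsmult_def by simp
qed

lemma sum_lincomb_mem:
  assumes V: "subspace V" and A: "finite A" and x: "\<forall>i\<in>A. x i \<in> V"
  shows "(\<lambda>m. \<Sum>i\<in>A. c i * x i m) \<in> V"
  using A x
proof (induction A rule: finite_induct)
  case empty
  then show ?case using V unfolding subspace_def vzero_def by simp
next
  case (insert a F)
  then have "(\<lambda>m. \<Sum>i\<in>F. c i * x i m) \<in> V" "x a \<in> V" by auto
  then have "vadd (vsmult (c a) (x a)) (\<lambda>m. \<Sum>i\<in>F. c i * x i m) \<in> V"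
    using V unfolding subspace_def by blast
  then show ?case using insert unfolding vadd_def vsmult_def by simp
qed

lemma const_mult_mem:
  assumes V: "subspace V" and F: "(\<lambda>x. F x) \<in> V"
  shows "(\<lambda>x. c * F x) \<in> V"
  using V F unfolding subspace_def vsmult_def by blast

lemma dpair_mem:
  assumes V: "subspace V" and F: "\<And>w. (\<lambda>x. F w x) \<in> V"
  shows "(\<lambda>x. dpair h (\<lambda>w. F w x)) \<in> V"
  unfolding dpair_def using sum_lincomb_mem[OF V finite_UNIV, of "\<lambda>w. (\<lambda>x. F w x)" h] F by simp

lemma dpair2_mem:
  assumes V: "subspace V" and F: "\<And>i j. (\<lambda>x. F i j x) \<in> V"
  shows "(\<lambda>x. dpair2 T (\<lambda>i j. F i j x)) \<in> V"
proof -
  have "\<forall>i. (\<lambda>x. \<Sum>j\<in>UNIV. T i j * F i j x) \<in> V"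
    using sum_lincomb_mem[OF V finite_UNIV] F by blast
  then have "(\<lambda>x. \<Sum>i\<in>UNIV. 1 * (\<Sum>j\<in>UNIV. T i j * F i j x)) \<in> V"
    using sum_lincomb_mem[OF V finite_UNIV, of "\<lambda>i x. \<Sum>j\<in>UNIV. T i j * F i j x" "\<lambda>_. 1"] by simp
  then show ?thesis unfolding dpair2_def by simp
qed

lemma in_tensorE:
  assumes "in_tensor V W T"
  shows "\<exists>ps. set ps \<subseteq> V \<times> W \<and> (\<forall>i j. T i j = (\<Sum>z\<leftarrow>ps. fst z i * snd z j))"
  using assms unfolding in_tensor_def by (auto simp: split_def)

lemma in_tensor_UNIV_rows:
  fixes T :: "'i::finite \<Rightarrow> 'i \<Rightarrow> 'a::field"
  assumes "\<And>k. (\<lambda>j. T k j) \<in> L"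
  shows "in_tensor UNIV L T"
proof -
  obtain ks :: "'i list" where ks: "set ks = UNIV" "distinct ks"
    using finite_distinct_list[OF finite_UNIV] by blast
  let ?ps = "map (\<lambda>k. (bvec k, \<lambda>j. T k j)) ks"
  have "set ?ps \<subseteq> UNIV \<times> L"
    using assms by auto
  moreover have "T = (\<lambda>i j. \<Sum>(v, w)\<leftarrow>?ps. v i * w j)"
  proof (intro ext)
    fix i j
    have "(\<Sum>(v, w)\<leftarrow>?ps. v i * w j) = (\<Sum>k\<in>UNIV. bvec k i * T k j)"
      using ks by (simp add: comp_def sum_list_distinct_conv_sum_set)
    also have "\<dots> = T i j"
      by (simp add: bvec_def)
    finally show "T i j = (\<Sum>(v, w)\<leftarrow>?ps. v i * w j)" ..
  qed
  ultimately show ?thesis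
    unfolding in_tensor_def by blast
qed

lemma subcoalgebra_translate_mem:
  assumes C: "subcoalgebra_dual H C" and p: "p \<in> C"
  shows "(\<lambda>m. dpair (mu H x m) (\<lambda>z. dpair (mu H z y) p)) \<in> C"
proof -
  have sub: "subspace C" using C unfolding subcoalgebra_dual_def by blast
  have rows: "(\<lambda>m. dpair (mu H x m) v) \<in> C" if "v \<in> C" for v
  proof -
    have "in_tensor C C (dcomul H v)" using C \<open>v \<in> C\<close> unfolding subcoalgebra_dual_def by blast
    then obtain ps where ps: "set ps \<subseteq> C \<times> C" "\<And>i j. dcomul H v i j = (\<Sum>z\<leftarrow>ps. fst z i * snd z j)"
      using in_tensorE by blast
    have "\<forall>z\<in>set ps. snd z \<in> C" using ps(1) by (auto simp: subset_iff mem_Times_iff)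
    then have "(\<lambda>m. \<Sum>z\<leftarrow>ps. fst z x * snd z m) \<in> C"
      using sum_list_lincomb_mem[OF sub, of ps snd "\<lambda>z. fst z x"] by blast
    moreover have "(\<lambda>m. dpair (mu H x m) v) = (\<lambda>m. \<Sum>z\<leftarrow>ps. fst z x * snd z m)"
      using ps(2) by (simp add: dcomul_eq_dpair)
    ultimately show ?thesis by simp
  qed
  have "in_tensor C C (dcomul H p)" using C p unfolding subcoalgebra_dual_def by blast
  then obtain ps where ps: "set ps \<subseteq> C \<times> C" "\<And>i j. dcomul H p i j = (\<Sum>z\<leftarrow>ps. fst z i * snd z j)"
    using in_tensorE by blast
  have "(\<lambda>m. dpair (mu H x m) (\<lambda>z. dpair (mu H z y) p)) = (\<lambda>m. \<Sum>z\<leftarrow>ps. snd z y * dpair (mu H x m) (fst z))"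
    using ps(2) by (simp add: dcomul_eq_dpair[symmetric] dpair_sum_list_right dpair_mult_const mult.commute)
  moreover have "(\<lambda>m. \<Sum>z\<leftarrow>ps. snd z y * dpair (mu H x m) (fst z)) \<in> C"
  proof -
    have "\<forall>z\<in>set ps. fst z \<in> C" using ps(1) by (auto simp: subset_iff mem_Times_iff)
    then have "\<forall>z\<in>set ps. (\<lambda>m. dpair (mu H x m) (fst z)) \<in> C" using rows by blast
    then show ?thesis using sum_list_lincomb_mem[OF sub, of ps "\<lambda>z m. dpair (mu H x m) (fst z)" "\<lambda>z. snd z y"] by blast
  qed
  ultimately show ?thesis by simp
qed

lemma drinfeld_vadd: "drinfeld H R (vadd x y) = vadd (drinfeld H R x) (drinfeld H R y)"
  unfolding drinfeld_def vadd_def by (simp add: distrib_right sum.distrib)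

lemma drinfeld_vsmult: "drinfeld H R (vsmult c x) = vsmult c (drinfeld H R x)"
  unfolding drinfeld_def vsmult_def by (simp add: sum_distrib_left mult.assoc)

lemma drinfeld_vzero: "drinfeld H R vzero = vzero"
  unfolding drinfeld_def vzero_def by simp

lemma subspace_image_linear:
  fixes f :: "('i \<Rightarrow> 'a::field) \<Rightarrow> 'j \<Rightarrow> 'a"
  assumes V: "subspace V" and zero: "f vzero = vzero"
    and add: "\<And>x y. f (vadd x y) = vadd (f x) (f y)" and smult: "\<And>c x. f (vsmult c x) = vsmult c (f x)"
  shows "subspace (f ` V)"
proof -
  have "vzero \<in> f ` V"
    using V zero unfolding subspace_def by (metis image_eqI)
  moreover have "vadd (f x) (f y) \<in> f ` V" if "x \<in> V" "y \<in> V" for x y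
    using V that add[of x y] unfolding subspace_def by (metis image_eqI)
  moreover have "vsmult c (f x) \<in> f ` V" if "x \<in> V" for c x
    using V that smult[of c x] unfolding subspace_def by (metis image_eqI)
  ultimately show ?thesis
    unfolding subspace_def by blast
qed

lemma subspace_drinfeld_image: "subspace C \<Longrightarrow> subspace (drinfeld H R ` C)"
  by (rule subspace_image_linear) (simp_all add: drinfeld_vzero drinfeld_vadd drinfeld_vsmult)

section \<open>Quasitriangular Hopf algebras in coordinates\<close>

locale quasitriangular_hopf =
  fixes H :: "('i::finite, 'a::field) hopf_data" and R :: "'i \<Rightarrow> 'i \<Rightarrow> 'a"
  assumes hopf: "hopf_algebra H" and qt: "quasitriangular H R"
begin

abbreviation "\<mu> \<equiv> mu H"
abbreviation "\<delta> \<equiv> dl H"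
abbreviation "\<eta> \<equiv> one H"
abbreviation "\<epsilon> \<equiv> ep H"
abbreviation "\<sigma> \<equiv> ant H"

text \<open>
  The axioms are used in pairing form: \<open>dpair (\<mu> a b) \<phi>\<close> is \<open>\<phi>(e\<^sub>a e\<^sub>b)\<close> and
  \<open>dpair2 (\<delta> l) \<Phi>\<close> is \<open>\<Phi>(\<Delta> e\<^sub>l)\<close>.
\<close>

lemma mu_assoc: "dpair (\<mu> a b) (\<lambda>m. dpair (\<mu> m c) \<phi>) = dpair (\<mu> b c) (\<lambda>m. dpair (\<mu> a m) \<phi>)"
proof -
  have "hmul H (hmul H (bvec a) (bvec b)) (bvec c) = hmul H (bvec a) (hmul H (bvec b) (bvec c))"
    using hopf unfolding hopf_algebra_def by blast
  then have "dpair (hmul H (hmul H (bvec a) (bvec b)) (bvec c)) \<phi> = dpair (hmul H (bvec a) (hmul H (bvec b) (bvec c))) \<phi>" by simp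
  then show ?thesis by (simp add: dpair_hmul)
qed

lemma mu_unit_left: "dpair \<eta> (\<lambda>a. dpair (\<mu> a b) \<phi>) = \<phi> b"
proof -
  have "hmul H \<eta> (bvec b) = bvec b" using hopf unfolding hopf_algebra_def by blast
  then have "dpair (hmul H \<eta> (bvec b)) \<phi> = dpair (bvec b) \<phi>" by simp
  then show ?thesis by (simp add: dpair_hmul)
qed

lemma mu_unit_right: "dpair \<eta> (\<lambda>b. dpair (\<mu> a b) \<phi>) = \<phi> a"
proof -
  have "hmul H (bvec a) \<eta> = bvec a" using hopf unfolding hopf_algebra_def by blast
  then have "dpair (hmul H (bvec a) \<eta>) \<phi> = dpair (bvec a) \<phi>" by simp
  then show ?thesis by (simp add: dpair_hmul)
qed

lemma mu_unit_right_inner: "dpair \<eta> (\<lambda>c'. dpair x (\<lambda>i. dpair y (\<lambda>j. dpair (\<mu> c c') (\<lambda>k. \<Psi> i j k)))) = dpair x (\<lambda>i. dpair y (\<lambda>j. \<Psi> i j c))"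
  by (simp only: dpair_swap[of \<eta> x] dpair_swap[of \<eta> y] mu_unit_right)

lemma mu_unit_left_inner: "dpair \<eta> (\<lambda>b. dpair x (\<lambda>i. dpair (\<mu> b b') (\<lambda>j. \<Psi> i j))) = dpair x (\<lambda>i. \<Psi> i b')"
  by (simp only: dpair_swap[of \<eta> x] mu_unit_left)

lemma mu_assoc_lincomb_left:
  "dpair x (\<lambda>s. dpair (\<mu> s a) (\<lambda>z. dpair (\<mu> z b) p)) = dpair (\<mu> a b) (\<lambda>z. dpair x (\<lambda>s. dpair (\<mu> s z) p))"
  by (simp only: mu_assoc) (rule dpair_swap)

lemma mu_assoc_lincomb_right:
  "dpair x (\<lambda>s. dpair (\<mu> a s) (\<lambda>z. dpair (\<mu> b z) p)) = dpair (\<mu> b a) (\<lambda>z. dpair x (\<lambda>s. dpair (\<mu> z s) p))"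
  by (simp only: dpair_swap[of "\<mu> b a"] mu_assoc)

lemma mu_assoc_translate: "dpair (\<mu> x1 s1) (\<lambda>c. dpair (\<mu> b c1) (\<lambda>z. dpair (\<mu> z c) q)) = dpair (\<mu> c1 x1) (\<lambda>i. dpair (\<mu> b i) (\<lambda>t. dpair (\<mu> t s1) q))"
proof -
  have "dpair (\<mu> x1 s1) (\<lambda>c. dpair (\<mu> b c1) (\<lambda>z. dpair (\<mu> z c) q)) = dpair (\<mu> b c1) (\<lambda>z. dpair (\<mu> x1 s1) (\<lambda>c. dpair (\<mu> z c) q))"
    by (rule dpair_swap)
  also have "\<dots> = dpair (\<mu> b c1) (\<lambda>z. dpair (\<mu> z x1) (\<lambda>c. dpair (\<mu> c s1) q))"
    by (simp only: mu_assoc)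
  also have "\<dots> = dpair (\<mu> c1 x1) (\<lambda>i. dpair (\<mu> b i) (\<lambda>t. dpair (\<mu> t s1) q))"
    by (rule mu_assoc)
  finally show ?thesis .
qed

lemma mu_assoc_regroup: "dpair u (\<lambda>m. dpair v (\<lambda>n. dpair (\<mu> m n) (\<lambda>k. dpair (\<mu> a k) (\<lambda>m'. dpair (\<mu> m' d) \<phi>))))
  = dpair v (\<lambda>n. dpair (\<mu> n d) (\<lambda>j. dpair u (\<lambda>m. dpair (\<mu> m j) (\<lambda>k. dpair (\<mu> a k) \<phi>))))"
proof -
  have "dpair u (\<lambda>m. dpair v (\<lambda>n. dpair (\<mu> m n) (\<lambda>k. dpair (\<mu> a k) (\<lambda>m'. dpair (\<mu> m' d) \<phi>))))
     = dpair u (\<lambda>m. dpair v (\<lambda>n. dpair (\<mu> n d) (\<lambda>j. dpair (\<mu> m j) (\<lambda>k. dpair (\<mu> a k) \<phi>))))"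
    by (simp only: mu_assoc)
  also have "\<dots> = dpair v (\<lambda>n. dpair u (\<lambda>m. dpair (\<mu> n d) (\<lambda>j. dpair (\<mu> m j) (\<lambda>k. dpair (\<mu> a k) \<phi>))))"
    by (rule dpair_swap)
  also have "\<dots> = dpair v (\<lambda>n. dpair (\<mu> n d) (\<lambda>j. dpair u (\<lambda>m. dpair (\<mu> m j) (\<lambda>k. dpair (\<mu> a k) \<phi>))))"
    by (subst dpair_swap) (rule refl)
  finally show ?thesis .
qed

lemma mu_assoc_regroup_nested: "dpair y (\<lambda>k. dpair (\<mu> s2 k) (\<lambda>m. dpair w (\<lambda>n. dpair (\<mu> m n) (\<lambda>k'. dpair (\<mu> a k') (\<lambda>m'. dpair (\<mu> m' d) \<phi>)))))
  = dpair w (\<lambda>z. dpair (\<mu> z d) (\<lambda>j. dpair y (\<lambda>k. dpair (\<mu> s2 k) (\<lambda>m. dpair (\<mu> m j) (\<lambda>k'. dpair (\<mu> a k') \<phi>)))))"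
proof -
  have "dpair y (\<lambda>k. dpair (\<mu> s2 k) (\<lambda>m. dpair w (\<lambda>n. dpair (\<mu> m n) (\<lambda>k'. dpair (\<mu> a k') (\<lambda>m'. dpair (\<mu> m' d) \<phi>)))))
     = dpair y (\<lambda>k. dpair w (\<lambda>z. dpair (\<mu> z d) (\<lambda>j. dpair (\<mu> s2 k) (\<lambda>m. dpair (\<mu> m j) (\<lambda>k'. dpair (\<mu> a k') \<phi>)))))"
    by (simp only: mu_assoc_regroup)
  also have "\<dots> = dpair w (\<lambda>z. dpair y (\<lambda>k. dpair (\<mu> z d) (\<lambda>j. dpair (\<mu> s2 k) (\<lambda>m. dpair (\<mu> m j) (\<lambda>k'. dpair (\<mu> a k') \<phi>)))))"
    by (rule dpair_swap)
  also have "\<dots> = dpair w (\<lambda>z. dpair (\<mu> z d) (\<lambda>j. dpair y (\<lambda>k. dpair (\<mu> s2 k) (\<lambda>m. dpair (\<mu> m j) (\<lambda>k'. dpair (\<mu> a k') \<phi>)))))"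
    by (subst dpair_swap) (rule refl)
  finally show ?thesis .
qed

lemma mu_unit_right_nested: "dpair \<eta> (\<lambda>j. dpair x (\<lambda>k. dpair (v k) (\<lambda>m. dpair (\<mu> m j) F))) = dpair x (\<lambda>k. dpair (v k) (\<lambda>m. F m))"
proof -
  have "dpair \<eta> (\<lambda>j. dpair x (\<lambda>k. dpair (v k) (\<lambda>m. dpair (\<mu> m j) F))) = dpair x (\<lambda>k. dpair \<eta> (\<lambda>j. dpair (v k) (\<lambda>m. dpair (\<mu> m j) F)))"
    by (rule dpair_swap)
  also have "\<dots> = dpair x (\<lambda>k. dpair (v k) (\<lambda>m. dpair \<eta> (\<lambda>j. dpair (\<mu> m j) F)))"
    by (subst dpair_swap) (rule refl)
  also have "\<dots> = dpair x (\<lambda>k. dpair (v k) (\<lambda>m. F m))"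
    by (simp only: mu_unit_right)
  finally show ?thesis .
qed

(* an instance of dpair_swap that simp only can use without looping *)
lemma dpair_swap_over_mu: "dpair x (\<lambda>k. dpair y (\<lambda>z. dpair (\<mu> k d) (\<lambda>w. F z w))) = dpair y (\<lambda>z. dpair x (\<lambda>k. dpair (\<mu> k d) (\<lambda>w. F z w)))"
  by (rule dpair_swap)

lemma hcomul_bvec: "hcomul H (bvec l) = \<delta> l"
  by (simp add: hcomul_eq_dpair)

lemma dl_coassoc: "dpair2 (\<delta> l) (\<lambda>m k. dpair2 (\<delta> m) (\<lambda>i j. \<Psi> i j k)) = dpair2 (\<delta> l) (\<lambda>i m. dpair2 (\<delta> m) (\<lambda>j k. \<Psi> i j k))"
proof -
  have "\<forall>i j k. (\<Sum>m\<in>UNIV. hcomul H (bvec l) m k * \<delta> m i j) = (\<Sum>m\<in>UNIV. hcomul H (bvec l) i m * \<delta> m j k)"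
    using hopf unfolding hopf_algebra_def by blast
  then have "(\<lambda>i j k. \<Sum>m\<in>UNIV. \<delta> l m k * \<delta> m i j) = (\<lambda>i j k. \<Sum>m\<in>UNIV. \<delta> l i m * \<delta> m j k)"
    by (simp add: hcomul_bvec)
  then have "dpair3 (\<lambda>i j k. \<Sum>m\<in>UNIV. \<delta> l m k * \<delta> m i j) \<Psi> = dpair3 (\<lambda>i j k. \<Sum>m\<in>UNIV. \<delta> l i m * \<delta> m j k) \<Psi>" by simp
  then show ?thesis by (simp only: dpair3_compose_left dpair3_compose_right)
qed

lemma dl_counit_left: "dpair2 (\<delta> l) (\<lambda>i j. \<epsilon> i * \<phi> j) = \<phi> l"
proof -
  have "\<forall>j. (\<Sum>i\<in>UNIV. \<epsilon> i * hcomul H (bvec l) i j) = bvec l j"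
    using hopf unfolding hopf_algebra_def by blast
  then have "\<And>j. (\<Sum>i\<in>UNIV. \<epsilon> i * \<delta> l i j) = bvec l j" by (simp add: hcomul_bvec)
  then have "(\<Sum>j\<in>UNIV. (\<Sum>i\<in>UNIV. \<epsilon> i * \<delta> l i j) * \<phi> j) = (\<Sum>j\<in>UNIV. bvec l j * \<phi> j)" by simp
  then have "(\<Sum>j\<in>UNIV. (\<Sum>i\<in>UNIV. \<epsilon> i * \<delta> l i j) * \<phi> j) = \<phi> l" by (simp add: bvec_def)
  moreover have "dpair2 (\<delta> l) (\<lambda>i j. \<epsilon> i * \<phi> j) = (\<Sum>j\<in>UNIV. (\<Sum>i\<in>UNIV. \<epsilon> i * \<delta> l i j) * \<phi> j)"
    unfolding dpair2_def sum_distrib_right by (subst sum.swap) (simp add: mult_ac)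
  ultimately show ?thesis by simp
qed

lemma dl_counit_right: "dpair2 (\<delta> l) (\<lambda>i j. \<phi> i * \<epsilon> j) = \<phi> l"
proof -
  have "\<forall>i. (\<Sum>j\<in>UNIV. hcomul H (bvec l) i j * \<epsilon> j) = bvec l i"
    using hopf unfolding hopf_algebra_def by blast
  then have "\<And>i. (\<Sum>j\<in>UNIV. \<delta> l i j * \<epsilon> j) = bvec l i" by (simp add: hcomul_bvec)
  then have "(\<Sum>i\<in>UNIV. \<phi> i * (\<Sum>j\<in>UNIV. \<delta> l i j * \<epsilon> j)) = (\<Sum>i\<in>UNIV. \<phi> i * bvec l i)" by simp
  then have "(\<Sum>i\<in>UNIV. \<phi> i * (\<Sum>j\<in>UNIV. \<delta> l i j * \<epsilon> j)) = \<phi> l" by (simp add: bvec_def)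
  moreover have "dpair2 (\<delta> l) (\<lambda>i j. \<phi> i * \<epsilon> j) = (\<Sum>i\<in>UNIV. \<phi> i * (\<Sum>j\<in>UNIV. \<delta> l i j * \<epsilon> j))"
    unfolding dpair2_def sum_distrib_left by (simp add: mult_ac)
  ultimately show ?thesis by simp
qed

lemma dl_mult: "dpair (\<mu> a c) (\<lambda>l. dpair2 (\<delta> l) \<Phi>) = dpair2 (\<delta> a) (\<lambda>p q. dpair2 (\<delta> c) (\<lambda>r s. dpair (\<mu> p r) (\<lambda>i. dpair (\<mu> q s) (\<lambda>j. \<Phi> i j))))"
proof -
  have "hcomul H (hmul H (bvec a) (bvec c)) = tmul H (hcomul H (bvec a)) (hcomul H (bvec c))"
    using hopf unfolding hopf_algebra_def by blast
  then have "dpair2 (hcomul H (hmul H (bvec a) (bvec c))) \<Phi> = dpair2 (tmul H (\<delta> a) (\<delta> c)) \<Phi>" by (simp add: hcomul_bvec)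
  then show ?thesis by (simp only: dpair2_hcomul dpair_hmul dpair_bvec_left dpair2_tmul)
qed

lemma ep_mult: "dpair (\<mu> a b) \<epsilon> = \<epsilon> a * \<epsilon> b"
proof -
  have "hcounit H (hmul H (bvec a) (bvec b)) = hcounit H (bvec a) * hcounit H (bvec b)"
    using hopf unfolding hopf_algebra_def by blast
  then show ?thesis by (simp add: hcounit_eq_dpair dpair_hmul)
qed

lemma ep_one: "dpair \<eta> \<epsilon> = 1"
proof -
  have "hcounit H \<eta> = 1" using hopf unfolding hopf_algebra_def by blast
  then show ?thesis by (simp add: hcounit_eq_dpair)
qed

lemma antipode_left: "dpair2 (\<delta> l) (\<lambda>i b. dpair (\<sigma> i) (\<lambda>a. dpair (\<mu> a b) \<phi>)) = \<epsilon> l * dpair \<eta> \<phi>"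
proof -
  have "mult_map H (\<lambda>a b. \<Sum>i\<in>UNIV. hcomul H (bvec l) i b * \<sigma> i a) = vsmult (hcounit H (bvec l)) \<eta>"
    using hopf unfolding hopf_algebra_def by blast
  moreover have "(\<lambda>a b. \<Sum>i\<in>UNIV. hcomul H (bvec l) i b * \<sigma> i a) = (\<lambda>a b. dpair2 (\<delta> l) (\<lambda>i b'. \<sigma> i a * bvec b' b))"
    unfolding hcomul_bvec by (simp add: dpair2_def bvec_def mult_ac)
  ultimately have "dpair (mult_map H (\<lambda>a b. dpair2 (\<delta> l) (\<lambda>i b'. \<sigma> i a * bvec b' b))) \<phi> = dpair (vsmult (hcounit H (bvec l)) \<eta>) \<phi>" by simp
  then show ?thesis by (simp add: dpair_mult_map dpair2_lincomb2_left dpair2_tensor dpair_vsmult hcounit_eq_dpair)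
qed

lemma antipode_right: "dpair2 (\<delta> l) (\<lambda>a j. dpair (\<sigma> j) (\<lambda>b. dpair (\<mu> a b) \<phi>)) = \<epsilon> l * dpair \<eta> \<phi>"
proof -
  have "mult_map H (\<lambda>a b. \<Sum>j\<in>UNIV. hcomul H (bvec l) a j * \<sigma> j b) = vsmult (hcounit H (bvec l)) \<eta>"
    using hopf unfolding hopf_algebra_def by blast
  moreover have "(\<lambda>a b. \<Sum>j\<in>UNIV. hcomul H (bvec l) a j * \<sigma> j b) = (\<lambda>a b. dpair2 (\<delta> l) (\<lambda>a' j. bvec a' a * \<sigma> j b))"
    unfolding hcomul_bvec by (simp add: dpair2_def bvec_def mult_ac)
  ultimately have "dpair (mult_map H (\<lambda>a b. dpair2 (\<delta> l) (\<lambda>a' j. bvec a' a * \<sigma> j b))) \<phi> = dpair (vsmult (hcounit H (bvec l)) \<eta>) \<phi>" by simp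
  then show ?thesis by (simp add: dpair_mult_map dpair2_lincomb2_left dpair2_tensor dpair_vsmult hcounit_eq_dpair)
qed

definition Rinv where "Rinv = (SOME Rinv. tmul H R Rinv = tone H \<and> tmul H Rinv R = tone H)"

lemma Rinv_inverse: "tmul H R Rinv = tone H \<and> tmul H Rinv R = tone H"
proof -
  have "\<exists>Rinv. tmul H R Rinv = tone H \<and> tmul H Rinv R = tone H" using qt unfolding quasitriangular_def by blast
  then show ?thesis unfolding Rinv_def by (rule someI_ex)
qed

lemma dpair2_tone: "dpair2 (tone H) \<Phi> = dpair \<eta> (\<lambda>i. dpair \<eta> (\<lambda>j. \<Phi> i j))"
  unfolding tone_def by (rule dpair2_tensor)

lemma R_Rinv: "dpair2 R (\<lambda>a b. dpair2 Rinv (\<lambda>c d. dpair (\<mu> a c) (\<lambda>i. dpair (\<mu> b d) (\<lambda>j. \<Phi> i j)))) = dpair \<eta> (\<lambda>i. dpair \<eta> (\<lambda>j. \<Phi> i j))"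
proof -
  have "dpair2 (tmul H R Rinv) \<Phi> = dpair2 (tone H) \<Phi>" using Rinv_inverse by simp
  then show ?thesis by (simp only: dpair2_tmul dpair2_tone)
qed

lemma Rinv_R: "dpair2 Rinv (\<lambda>a b. dpair2 R (\<lambda>c d. dpair (\<mu> a c) (\<lambda>i. dpair (\<mu> b d) (\<lambda>j. \<Phi> i j)))) = dpair \<eta> (\<lambda>i. dpair \<eta> (\<lambda>j. \<Phi> i j))"
proof -
  have "dpair2 (tmul H Rinv R) \<Phi> = dpair2 (tone H) \<Phi>" using Rinv_inverse by simp
  then show ?thesis by (simp only: dpair2_tmul dpair2_tone)
qed

(* \<Delta>\<^sup>o\<^sup>p(h) R = R \<Delta>(h) *)
lemma R_comul_commute: "dpair2 (\<delta> l) (\<lambda>b a. dpair2 R (\<lambda>c d. dpair (\<mu> a c) (\<lambda>i. dpair (\<mu> b d) (\<lambda>j. \<Phi> i j))))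
   = dpair2 R (\<lambda>a b. dpair2 (\<delta> l) (\<lambda>c d. dpair (\<mu> a c) (\<lambda>i. dpair (\<mu> b d) (\<lambda>j. \<Phi> i j))))"
proof -
  have "tmul H (\<lambda>i j. hcomul H (bvec l) j i) R = tmul H R (hcomul H (bvec l))"
    using qt unfolding quasitriangular_def by blast
  then have "dpair2 (tmul H (\<lambda>i j. \<delta> l j i) R) \<Phi> = dpair2 (tmul H R (\<delta> l)) \<Phi>" by (simp add: hcomul_bvec)
  then show ?thesis by (simp only: dpair2_tmul dpair2_flip[of "\<delta> l"])
qed

(* (\<Delta> \<otimes> id) R = R\<^sub>1\<^sub>3 R\<^sub>2\<^sub>3 *)
lemma R_comul_left: "dpair2 R (\<lambda>m k. dpair2 (\<delta> m) (\<lambda>i j. \<Psi> i j k)) = dpair2 R (\<lambda>i c. dpair2 R (\<lambda>j c'. dpair (\<mu> c c') (\<lambda>k. \<Psi> i j k)))"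
proof -
  have "(\<lambda>i j k. \<Sum>m\<in>UNIV. R m k * \<delta> m i j) = t3mul H (\<lambda>i j k. R i k * \<eta> j) (\<lambda>i j k. \<eta> i * R j k)"
    using qt unfolding quasitriangular_def by blast
  then have "dpair3 (\<lambda>i j k. \<Sum>m\<in>UNIV. R m k * \<delta> m i j) \<Psi> = dpair3 (t3mul H (\<lambda>i j k. R i k * \<eta> j) (\<lambda>i j k. \<eta> i * R j k)) \<Psi>" by simp
  then show ?thesis by (simp add: dpair3_compose_left dpair3_t3mul dpair3_tensor_13_2 dpair3_tensor_1_2 dpair_dpair2_swap mu_unit_right mu_unit_left)
qed

(* (id \<otimes> \<Delta>) R = R\<^sub>1\<^sub>3 R\<^sub>1\<^sub>2 *)
lemma R_comul_right: "dpair2 R (\<lambda>i m. dpair2 (\<delta> m) (\<lambda>j k. \<Psi> i j k)) = dpair2 R (\<lambda>a k. dpair2 R (\<lambda>a' j. dpair (\<mu> a a') (\<lambda>i. \<Psi> i j k)))"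
proof -
  have "(\<lambda>i j k. \<Sum>m\<in>UNIV. R i m * \<delta> m j k) = t3mul H (\<lambda>i j k. R i k * \<eta> j) (\<lambda>i j k. R i j * \<eta> k)"
    using qt unfolding quasitriangular_def by blast
  then have "dpair3 (\<lambda>i j k. \<Sum>m\<in>UNIV. R i m * \<delta> m j k) \<Psi> = dpair3 (t3mul H (\<lambda>i j k. R i k * \<eta> j) (\<lambda>i j k. R i j * \<eta> k)) \<Psi>" by simp
  then show ?thesis by (simp add: dpair3_compose_right dpair3_t3mul dpair3_tensor_13_2 dpair3_tensor_2_1 dpair_dpair2_swap mu_unit_right_inner mu_unit_left_inner)
qed

lemma one_one_eq_R_counit_left: "dpair \<eta> (\<lambda>x. dpair \<eta> (\<lambda>y. \<Phi> x y)) = dpair2 R (\<lambda>i c. \<epsilon> i * dpair \<eta> (\<lambda>x. \<Phi> x c))"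
proof -
  define \<psi> where "\<psi> = (\<lambda>j k. dpair2 Rinv (\<lambda>c d. dpair (\<mu> j c) (\<lambda>x. dpair (\<mu> k d) (\<lambda>y. \<Phi> x y))))"
  have "dpair \<eta> (\<lambda>x. dpair \<eta> (\<lambda>y. \<Phi> x y)) = dpair2 R \<psi>"
    unfolding \<psi>_def by (rule R_Rinv[symmetric])
  also have "\<dots> = dpair2 R (\<lambda>m k. dpair2 (\<delta> m) (\<lambda>i j. \<epsilon> i * \<psi> j k))"
    by (simp only: dl_counit_left)
  also have "\<dots> = dpair2 R (\<lambda>i c. dpair2 R (\<lambda>j c'. dpair (\<mu> c c') (\<lambda>k. \<epsilon> i * \<psi> j k)))"
    by (rule R_comul_left)
  also have "\<dots> = dpair2 R (\<lambda>i c. \<epsilon> i * dpair2 R (\<lambda>j c'. dpair2 Rinv (\<lambda>c'' d. dpair (\<mu> j c'') (\<lambda>x. dpair (\<mu> c c') (\<lambda>k. dpair (\<mu> k d) (\<lambda>y. \<Phi> x y))))))"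
    unfolding \<psi>_def by (simp only: dpair_const_mult dpair2_const_mult dpair_dpair2_swap dpair_swap_over_mu)
  also have "\<dots> = dpair2 R (\<lambda>i c. \<epsilon> i * dpair2 R (\<lambda>j c'. dpair2 Rinv (\<lambda>c'' d. dpair (\<mu> j c'') (\<lambda>x. dpair (\<mu> c' d) (\<lambda>k. dpair (\<mu> c k) (\<lambda>y. \<Phi> x y))))))"
    by (simp only: mu_assoc)
  also have "\<dots> = dpair2 R (\<lambda>i c. \<epsilon> i * dpair \<eta> (\<lambda>x. dpair \<eta> (\<lambda>k. dpair (\<mu> c k) (\<lambda>y. \<Phi> x y))))"
    by (simp only: R_Rinv)
  also have "\<dots> = dpair2 R (\<lambda>i c. \<epsilon> i * dpair \<eta> (\<lambda>x. \<Phi> x c))"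
    by (simp only: mu_unit_right)
  finally show ?thesis .
qed

lemma R_counit_left: "dpair2 R (\<lambda>a b. \<epsilon> a * \<phi> b) = dpair \<eta> \<phi>"
proof -
  have "dpair \<eta> (\<lambda>x. dpair \<eta> (\<lambda>y. \<epsilon> x * \<phi> y)) = dpair2 R (\<lambda>i c. \<epsilon> i * dpair \<eta> (\<lambda>x. \<epsilon> x * \<phi> c))"
    by (rule one_one_eq_R_counit_left)
  then show ?thesis by (simp add: dpair_const_mult dpair_mult_const ep_one)
qed

lemma one_one_eq_R_counit_right: "dpair \<eta> (\<lambda>x. dpair \<eta> (\<lambda>y. \<Phi> x y)) = dpair2 R (\<lambda>a' j. \<epsilon> j * dpair \<eta> (\<lambda>y. \<Phi> a' y))"
proof -
  define \<psi> where "\<psi> = (\<lambda>i k. dpair2 Rinv (\<lambda>a b. dpair (\<mu> a i) (\<lambda>x. dpair (\<mu> b k) (\<lambda>y. \<Phi> x y))))"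
  have "dpair \<eta> (\<lambda>x. dpair \<eta> (\<lambda>y. \<Phi> x y)) = dpair2 Rinv (\<lambda>a b. dpair2 R (\<lambda>c d. dpair (\<mu> a c) (\<lambda>x. dpair (\<mu> b d) (\<lambda>y. \<Phi> x y))))"
    by (rule Rinv_R[symmetric])
  also have "\<dots> = dpair2 R \<psi>"
    unfolding \<psi>_def by (rule dpair2_swap)
  also have "\<dots> = dpair2 R (\<lambda>i m. dpair2 (\<delta> m) (\<lambda>j k. \<epsilon> j * \<psi> i k))"
    by (simp only: dl_counit_left)
  also have "\<dots> = dpair2 R (\<lambda>a k. dpair2 R (\<lambda>a' j. dpair (\<mu> a a') (\<lambda>i. \<epsilon> j * \<psi> i k)))"
    by (rule R_comul_right)
  also have "\<dots> = dpair2 R (\<lambda>a k. dpair2 R (\<lambda>a' j. \<epsilon> j * dpair2 Rinv (\<lambda>c d. dpair (\<mu> a a') (\<lambda>i. dpair (\<mu> c i) (\<lambda>x. dpair (\<mu> d k) (\<lambda>y. \<Phi> x y))))))"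
    unfolding \<psi>_def by (simp only: dpair_const_mult dpair2_const_mult dpair_dpair2_swap)
  also have "\<dots> = dpair2 R (\<lambda>a k. dpair2 R (\<lambda>a' j. \<epsilon> j * dpair2 Rinv (\<lambda>c d. dpair (\<mu> c a) (\<lambda>z. dpair (\<mu> z a') (\<lambda>x. dpair (\<mu> d k) (\<lambda>y. \<Phi> x y))))))"
    by (simp only: mu_assoc)
  also have "\<dots> = dpair2 R (\<lambda>a k. dpair2 R (\<lambda>a' j. \<epsilon> j * dpair2 Rinv (\<lambda>c d. dpair (\<mu> c a) (\<lambda>z. dpair (\<mu> d k) (\<lambda>y. dpair (\<mu> z a') (\<lambda>x. \<Phi> x y))))))"
    by (subst (2) dpair_swap) (rule refl)
  also have "\<dots> = dpair2 R (\<lambda>a' j. dpair2 R (\<lambda>a k. \<epsilon> j * dpair2 Rinv (\<lambda>c d. dpair (\<mu> c a) (\<lambda>z. dpair (\<mu> d k) (\<lambda>y. dpair (\<mu> z a') (\<lambda>x. \<Phi> x y))))))"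
    by (subst dpair2_swap) (rule refl)
  also have "\<dots> = dpair2 R (\<lambda>a' j. \<epsilon> j * dpair2 R (\<lambda>a k. dpair2 Rinv (\<lambda>c d. dpair (\<mu> c a) (\<lambda>z. dpair (\<mu> d k) (\<lambda>y. dpair (\<mu> z a') (\<lambda>x. \<Phi> x y))))))"
    by (simp only: dpair2_const_mult[symmetric])
  also have "\<dots> = dpair2 R (\<lambda>a' j. \<epsilon> j * dpair2 Rinv (\<lambda>c d. dpair2 R (\<lambda>a k. dpair (\<mu> c a) (\<lambda>z. dpair (\<mu> d k) (\<lambda>y. dpair (\<mu> z a') (\<lambda>x. \<Phi> x y))))))"
    by (subst (2) dpair2_swap) (rule refl)
  also have "\<dots> = dpair2 R (\<lambda>a' j. \<epsilon> j * dpair \<eta> (\<lambda>z. dpair \<eta> (\<lambda>y. dpair (\<mu> z a') (\<lambda>x. \<Phi> x y))))"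
    by (simp only: Rinv_R)
  also have "\<dots> = dpair2 R (\<lambda>a' j. \<epsilon> j * dpair \<eta> (\<lambda>y. \<Phi> a' y))"
    by (subst dpair_swap) (simp only: mu_unit_left)
  finally show ?thesis .
qed

lemma R_counit_right: "dpair2 R (\<lambda>a b. \<phi> a * \<epsilon> b) = dpair \<eta> \<phi>"
proof -
  have "dpair \<eta> (\<lambda>x. dpair \<eta> (\<lambda>y. \<phi> x * \<epsilon> y)) = dpair2 R (\<lambda>a' j. \<epsilon> j * dpair \<eta> (\<lambda>y. \<phi> a' * \<epsilon> y))"
    by (rule one_one_eq_R_counit_right)
  then show ?thesis by (simp add: dpair_const_mult dpair_mult_const ep_one mult.commute)
qed

(* \<Sum> R\<^sup>1 r\<^sup>1 \<otimes> S(r\<^sup>2) R\<^sup>2 = 1 \<otimes> 1 *)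
lemma R_antipode_R: "dpair2 R (\<lambda>u1 u2. dpair2 R (\<lambda>x1 x2. dpair (\<mu> u1 x1) (\<lambda>i. dpair (\<sigma> x2) (\<lambda>z. dpair (\<mu> z u2) (\<lambda>j. \<Phi> i j)))))
   = dpair \<eta> (\<lambda>i. dpair \<eta> (\<lambda>j. \<Phi> i j))"
proof -
  have "dpair2 R (\<lambda>u1 u2. dpair2 R (\<lambda>x1 x2. dpair (\<mu> u1 x1) (\<lambda>i. dpair (\<sigma> x2) (\<lambda>z. dpair (\<mu> z u2) (\<lambda>j. \<Phi> i j)))))
     = dpair2 R (\<lambda>i m. dpair2 (\<delta> m) (\<lambda>j k. dpair (\<sigma> j) (\<lambda>z. dpair (\<mu> z k) (\<lambda>j'. \<Phi> i j'))))"
    by (rule R_comul_right[symmetric])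
  also have "\<dots> = dpair2 R (\<lambda>i m. dpair \<eta> (\<lambda>j'. \<Phi> i j') * \<epsilon> m)"
    by (simp only: antipode_left mult.commute)
  also have "\<dots> = dpair \<eta> (\<lambda>i. dpair \<eta> (\<lambda>j. \<Phi> i j))"
    by (rule R_counit_right)
  finally show ?thesis .
qed

section \<open>The Drinfeld map\<close>

abbreviation "fQ \<equiv> drinfeld H R"

definition Qpair :: "('i \<Rightarrow> 'i \<Rightarrow> 'a) \<Rightarrow> 'a" where
  "Qpair F = dpair2 (Qel H R) F"

lemma dpair_drinfeld: "dpair (fQ p) \<phi> = Qpair (\<lambda>i j. p i * \<phi> j)"
  unfolding Qpair_def drinfeld_def dpair_def dpair2_def sum_distrib_right sum_distrib_left
  by (subst sum.swap) (simp add: mult_ac)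

lemma Qpair_expand:
  "Qpair F = dpair2 R (\<lambda>b a. dpair2 R (\<lambda>c d. dpair (\<mu> a c) (\<lambda>i. dpair (\<mu> b d) (\<lambda>j. F i j))))"
  unfolding Qpair_def Qel_def by (simp only: dpair2_tmul dpair2_flip[of R])

lemma dpair_drinfeld_expand:
  "dpair (fQ p) \<phi> = dpair2 R (\<lambda>b a. dpair2 R (\<lambda>c d. dpair (\<mu> a c) (\<lambda>i. dpair (\<mu> b d) (\<lambda>j. p i * \<phi> j))))"
  unfolding dpair_drinfeld Qpair_expand ..

lemma Qpair_dpair2: "Qpair (\<lambda>q1 q2. dpair2 T (\<lambda>a b. F a b q1 q2)) = dpair2 T (\<lambda>a b. Qpair (\<lambda>q1 q2. F a b q1 q2))"
proof -
  have "Qpair (\<lambda>q1 q2. dpair2 T (\<lambda>a b. F a b q1 q2)) = dpair2 R (\<lambda>b' a'. dpair2 R (\<lambda>c d. dpair2 T (\<lambda>a b. dpair (\<mu> a' c) (\<lambda>q1. dpair (\<mu> b' d) (\<lambda>q2. F a b q1 q2)))))"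
    unfolding Qpair_expand by (simp only: dpair_dpair2_swap)
  also have "\<dots> = dpair2 T (\<lambda>a b. Qpair (\<lambda>q1 q2. F a b q1 q2))"
    unfolding Qpair_expand by (subst (2) dpair2_swap, subst dpair2_swap) (rule refl)
  finally show ?thesis .
qed

lemma Qpair_dpair: "Qpair (\<lambda>q1 q2. dpair x (\<lambda>w. F w q1 q2)) = dpair x (\<lambda>w. Qpair (\<lambda>q1 q2. F w q1 q2))"
proof -
  have e: "dpair x G = dpair2 (\<lambda>i j. x i * bvec i j) (\<lambda>i j. G i)" for G
    unfolding dpair_def dpair2_def bvec_def by simp
  show ?thesis unfolding e Qpair_dpair2 ..
qed

lemma Qpair_const_mult: "Qpair (\<lambda>q1 q2. c * F q1 q2) = c * Qpair F"
  unfolding Qpair_expand by (simp only: dpair2_const_mult[symmetric] dpair_const_mult[symmetric])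

lemma Qpair_mult_const: "Qpair (\<lambda>q1 q2. F q1 q2 * c) = Qpair F * c"
  unfolding Qpair_expand by (simp only: dpair2_mult_const[symmetric] dpair_mult_const[symmetric])

lemma drinfeld_ep: "fQ \<epsilon> = \<eta>"
proof (rule dpair_ext)
  fix \<phi>
  have "dpair (fQ \<epsilon>) \<phi> = dpair2 R (\<lambda>b a. dpair2 R (\<lambda>c d. dpair (\<mu> a c) \<epsilon> * dpair (\<mu> b d) \<phi>))"
    by (simp only: dpair_drinfeld_expand dpair_dpair_product)
  also have "\<dots> = dpair2 R (\<lambda>b a. dpair2 R (\<lambda>c d. \<epsilon> c * (dpair (\<mu> b d) \<phi> * \<epsilon> a)))"
    by (simp only: ep_mult mult_ac)
  also have "\<dots> = dpair2 R (\<lambda>b a. dpair \<eta> (\<lambda>d. dpair (\<mu> b d) \<phi>) * \<epsilon> a)"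
    by (simp only: R_counit_left dpair_mult_const[symmetric])
  also have "\<dots> = dpair \<eta> \<phi>"
    by (simp only: mu_unit_right R_counit_right)
  finally show "dpair (fQ \<epsilon>) \<phi> = dpair \<eta> \<phi>" .
qed

(* R_sandwich y q = \<Sum> q(R\<^sup>2 r\<^sup>1) R\<^sup>1 y r\<^sup>2 *)
definition R_sandwich :: "('i \<Rightarrow> 'a) \<Rightarrow> ('i \<Rightarrow> 'a) \<Rightarrow> 'i \<Rightarrow> 'a" where
  "R_sandwich y q = (\<lambda>l. dpair2 R (\<lambda>a b. dpair2 R (\<lambda>c d. dpair (\<mu> b c) (\<lambda>z. q z * dpair y (\<lambda>k. dpair (\<mu> a k) (\<lambda>m. \<mu> m d l))))))"

lemma dpair_R_sandwich: "dpair (R_sandwich y q) \<phi> = dpair2 R (\<lambda>a b. dpair2 R (\<lambda>c d. dpair (\<mu> b c) (\<lambda>z. q z * dpair y (\<lambda>k. dpair (\<mu> a k) (\<lambda>m. dpair (\<mu> m d) \<phi>)))))"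
  unfolding R_sandwich_def by (simp only: dpair_lincomb2_left dpair_lincomb_left dpair_scale_left)

lemma drinfeld_dmul: "fQ (dmul H p q) = R_sandwich (fQ p) q"
proof (rule dpair_ext)
  fix \<phi>
  have "dpair (fQ (dmul H p q)) \<phi> = dpair2 R (\<lambda>b a. dpair2 R (\<lambda>c d. dpair (\<mu> a c) (\<lambda>i. dpair2 (\<delta> i) (\<lambda>x y. p x * q y * dpair (\<mu> b d) \<phi>))))"
    unfolding dpair_drinfeld_expand by (simp only: dpair_const_mult) (simp only: dmul_eq_dpair2 dpair2_mult_const[symmetric])
  also have "\<dots> = dpair2 R (\<lambda>b a. dpair2 R (\<lambda>c d. dpair2 (\<delta> a) (\<lambda>p' q'. dpair2 (\<delta> c) (\<lambda>r s. dpair (\<mu> p' r) (\<lambda>x. dpair (\<mu> q' s) (\<lambda>y. p x * q y * dpair (\<mu> b d) \<phi>))))))"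
    by (simp only: dl_mult)
  also have "\<dots> = dpair2 R (\<lambda>b a. dpair2 (\<delta> a) (\<lambda>p' q'. dpair2 R (\<lambda>c d. dpair2 (\<delta> c) (\<lambda>r s. dpair (\<mu> p' r) (\<lambda>x. dpair (\<mu> q' s) (\<lambda>y. p x * q y * dpair (\<mu> b d) \<phi>))))))"
    by (subst (2) dpair2_swap) (rule refl)
  also have "\<dots> = dpair2 R (\<lambda>a1 k1. dpair2 R (\<lambda>a1' p'. dpair (\<mu> a1 a1') (\<lambda>b. dpair2 R (\<lambda>c d. dpair2 (\<delta> c) (\<lambda>r s. dpair (\<mu> p' r) (\<lambda>x. dpair (\<mu> k1 s) (\<lambda>y. p x * q y * dpair (\<mu> b d) \<phi>)))))))"
    by (rule R_comul_right)
  also have "\<dots> = dpair2 R (\<lambda>a1 k1. dpair2 R (\<lambda>a1' p'. dpair (\<mu> a1 a1') (\<lambda>b. dpair2 R (\<lambda>r c. dpair2 R (\<lambda>s c'. dpair (\<mu> c c') (\<lambda>d. dpair (\<mu> p' r) (\<lambda>x. dpair (\<mu> k1 s) (\<lambda>y. p x * q y * dpair (\<mu> b d) \<phi>))))))))"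
    by (simp only: R_comul_left)
  also have "\<dots> = dpair2 R (\<lambda>a1 k1. dpair2 R (\<lambda>a1' p'. dpair2 R (\<lambda>r c. dpair2 R (\<lambda>s c'. dpair (\<mu> p' r) p * dpair (\<mu> k1 s) q * dpair (\<mu> a1 a1') (\<lambda>b. dpair (\<mu> c c') (\<lambda>d. dpair (\<mu> b d) \<phi>))))))"
    by (simp only: dpair_dpair2_swap dpair_dpair_product_const dpair_const_mult)
  also have "\<dots> = dpair2 R (\<lambda>a1 k1. dpair2 R (\<lambda>a1' p'. dpair2 R (\<lambda>r c. dpair2 R (\<lambda>s c'. dpair (\<mu> p' r) p * dpair (\<mu> k1 s) q * dpair (\<mu> c c') (\<lambda>d. dpair (\<mu> a1 a1') (\<lambda>b. dpair (\<mu> b d) \<phi>))))))"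
    by (subst dpair_swap) (rule refl)
  also have "\<dots> = dpair2 R (\<lambda>a1 k1. dpair2 R (\<lambda>a1' p'. dpair2 R (\<lambda>r c. dpair2 R (\<lambda>s c'. dpair (\<mu> p' r) p * dpair (\<mu> k1 s) q * dpair (\<mu> c c') (\<lambda>d. dpair (\<mu> a1' d) (\<lambda>m. dpair (\<mu> a1 m) \<phi>))))))"
    by (simp only: mu_assoc)
  finally have L: "dpair (fQ (dmul H p q)) \<phi> = \<dots>" .
  have "dpair (R_sandwich (fQ p) q) \<phi> = dpair2 R (\<lambda>a b. dpair2 R (\<lambda>c d. dpair2 R (\<lambda>b' a'. dpair2 R (\<lambda>c' d'. dpair (\<mu> b c) q * (dpair (\<mu> a' c') p * dpair (\<mu> b' d') (\<lambda>j. dpair (\<mu> a j) (\<lambda>m. dpair (\<mu> m d) \<phi>)))))))"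
    by (simp only: dpair_R_sandwich dpair_drinfeld_expand dpair_const_mult dpair_mult_const dpair2_const_mult[symmetric] dpair_dpair2_swap)
  also have "\<dots> = dpair2 R (\<lambda>a b. dpair2 R (\<lambda>b' a'. dpair2 R (\<lambda>c d. dpair2 R (\<lambda>c' d'. dpair (\<mu> b c) q * (dpair (\<mu> a' c') p * dpair (\<mu> b' d') (\<lambda>j. dpair (\<mu> a j) (\<lambda>m. dpair (\<mu> m d) \<phi>)))))))"
    by (subst (2) dpair2_swap) (rule refl)
  also have "\<dots> = dpair2 R (\<lambda>a b. dpair2 R (\<lambda>b' a'. dpair2 R (\<lambda>c' d'. dpair2 R (\<lambda>c d. dpair (\<mu> b c) q * (dpair (\<mu> a' c') p * dpair (\<mu> b' d') (\<lambda>j. dpair (\<mu> a j) (\<lambda>m. dpair (\<mu> m d) \<phi>)))))))"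
    by (subst (3) dpair2_swap) (rule refl)
  also have "\<dots> = dpair2 R (\<lambda>a b. dpair2 R (\<lambda>b' a'. dpair2 R (\<lambda>c' d'. dpair2 R (\<lambda>c d. dpair (\<mu> b c) q * (dpair (\<mu> a' c') p * dpair (\<mu> d' d) (\<lambda>n. dpair (\<mu> b' n) (\<lambda>m. dpair (\<mu> a m) \<phi>)))))))"
    by (simp only: mu_assoc)
  finally have Rr: "dpair (R_sandwich (fQ p) q) \<phi> = \<dots>" .
  show "dpair (fQ (dmul H p q)) \<phi> = dpair (R_sandwich (fQ p) q) \<phi>"
    unfolding L Rr by (simp only: mult_ac)
qed

lemma mu_assoc_sandwich_ad: "dpair (\<mu> x1 s1) (\<lambda>c. dpair (\<mu> b c1) (\<lambda>z. dpair y (\<lambda>k. dpair (\<mu> s2 k) (\<lambda>m. dpair (\<sigma> x2) (\<lambda>n. dpair (\<mu> m n) (\<lambda>k'. dpair (\<mu> a k') (\<lambda>m'. dpair (\<mu> m' d) (\<lambda>t. dpair (\<mu> z c) q * \<phi> t))))))))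
  = dpair (\<mu> c1 x1) (\<lambda>i. dpair (\<sigma> x2) (\<lambda>z. dpair (\<mu> z d) (\<lambda>j. dpair (\<mu> b i) (\<lambda>t. dpair (\<mu> t s1) q) * dpair y (\<lambda>k. dpair (\<mu> s2 k) (\<lambda>m. dpair (\<mu> m j) (\<lambda>k'. dpair (\<mu> a k') \<phi>))))))"
proof -
  have "dpair (\<mu> x1 s1) (\<lambda>c. dpair (\<mu> b c1) (\<lambda>z. dpair y (\<lambda>k. dpair (\<mu> s2 k) (\<lambda>m. dpair (\<sigma> x2) (\<lambda>n. dpair (\<mu> m n) (\<lambda>k'. dpair (\<mu> a k') (\<lambda>m'. dpair (\<mu> m' d) (\<lambda>t. dpair (\<mu> z c) q * \<phi> t))))))))
    = dpair (\<mu> x1 s1) (\<lambda>c. dpair (\<mu> b c1) (\<lambda>z. dpair (\<mu> z c) q)) * dpair y (\<lambda>k. dpair (\<mu> s2 k) (\<lambda>m. dpair (\<sigma> x2) (\<lambda>n. dpair (\<mu> m n) (\<lambda>k'. dpair (\<mu> a k') (\<lambda>m'. dpair (\<mu> m' d) \<phi>)))))"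
    by (simp only: dpair_const_mult dpair_mult_const)
  also have "\<dots> = dpair (\<mu> c1 x1) (\<lambda>i. dpair (\<mu> b i) (\<lambda>t. dpair (\<mu> t s1) q)) * dpair (\<sigma> x2) (\<lambda>z. dpair (\<mu> z d) (\<lambda>j. dpair y (\<lambda>k. dpair (\<mu> s2 k) (\<lambda>m. dpair (\<mu> m j) (\<lambda>k'. dpair (\<mu> a k') \<phi>)))))"
    by (simp only: mu_assoc_translate mu_assoc_regroup_nested)
  also have "\<dots> = dpair (\<mu> c1 x1) (\<lambda>i. dpair (\<sigma> x2) (\<lambda>z. dpair (\<mu> z d) (\<lambda>j. dpair (\<mu> b i) (\<lambda>t. dpair (\<mu> t s1) q) * dpair y (\<lambda>k. dpair (\<mu> s2 k) (\<lambda>m. dpair (\<mu> m j) (\<lambda>k'. dpair (\<mu> a k') \<phi>))))))"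
    by (simp only: dpair_dpair_product_nested)
  finally show ?thesis .
qed

lemma dpair_sum_R_sandwich_ad:
  "dpair (\<lambda>l. \<Sum>c\<in>UNIV. R_sandwich (ad H (R c) y) (\<lambda>m. dpair (\<mu> m c) q) l) \<phi>
    = dpair2 R (\<lambda>a b. dpair2 R (\<lambda>s1 s2. dpair (\<mu> b s1) q * dpair y (\<lambda>k. dpair (\<mu> s2 k) (\<lambda>m. dpair (\<mu> a m) \<phi>))))"
proof -
  have "dpair (\<lambda>l. \<Sum>c\<in>UNIV. R_sandwich (ad H (R c) y) (\<lambda>m. dpair (\<mu> m c) q) l) \<phi>
    = (\<Sum>c\<in>UNIV. dpair2 R (\<lambda>a b. dpair2 R (\<lambda>c1 d. dpair (\<mu> b c1) (\<lambda>z. dpair (\<mu> z c) q * dpair (R c) (\<lambda>w. dpair2 (\<delta> w) (\<lambda>i j. dpair y (\<lambda>k. dpair (\<mu> i k) (\<lambda>m. dpair (\<sigma> j) (\<lambda>n. dpair (\<mu> m n) (\<lambda>k'. dpair (\<mu> a k') (\<lambda>m'. dpair (\<mu> m' d) \<phi>)))))))))))"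
    by (simp only: dpair_sum_left dpair_R_sandwich dpair_ad)
  also have "\<dots> = (\<Sum>c\<in>UNIV. dpair2 R (\<lambda>a b. dpair2 R (\<lambda>c1 d. dpair (\<mu> b c1) (\<lambda>z. dpair (R c) (\<lambda>w. dpair2 (\<delta> w) (\<lambda>i j. dpair y (\<lambda>k. dpair (\<mu> i k) (\<lambda>m. dpair (\<sigma> j) (\<lambda>n. dpair (\<mu> m n) (\<lambda>k'. dpair (\<mu> a k') (\<lambda>m'. dpair (\<mu> m' d) (\<lambda>t. dpair (\<mu> z c) q * \<phi> t))))))))))))"
    by (simp only: dpair_const_mult[symmetric] dpair2_const_mult[symmetric])
  also have "\<dots> = (\<Sum>c\<in>UNIV. dpair2 R (\<lambda>a b. dpair2 R (\<lambda>c1 d. dpair (R c) (\<lambda>w. dpair (\<mu> b c1) (\<lambda>z. dpair2 (\<delta> w) (\<lambda>i j. dpair y (\<lambda>k. dpair (\<mu> i k) (\<lambda>m. dpair (\<sigma> j) (\<lambda>n. dpair (\<mu> m n) (\<lambda>k'. dpair (\<mu> a k') (\<lambda>m'. dpair (\<mu> m' d) (\<lambda>t. dpair (\<mu> z c) q * \<phi> t))))))))))))"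
    by (subst dpair_swap) (rule refl)
  also have "\<dots> = (\<Sum>c\<in>UNIV. dpair2 R (\<lambda>a b. dpair2 R (\<lambda>c1 d. dpair (R c) (\<lambda>w. dpair2 (\<delta> w) (\<lambda>i j. dpair (\<mu> b c1) (\<lambda>z. dpair y (\<lambda>k. dpair (\<mu> i k) (\<lambda>m. dpair (\<sigma> j) (\<lambda>n. dpair (\<mu> m n) (\<lambda>k'. dpair (\<mu> a k') (\<lambda>m'. dpair (\<mu> m' d) (\<lambda>t. dpair (\<mu> z c) q * \<phi> t))))))))))))"
    by (simp only: dpair_dpair2_swap)
  also have "\<dots> = (\<Sum>c\<in>UNIV. dpair (R c) (\<lambda>w. dpair2 R (\<lambda>a b. dpair2 R (\<lambda>c1 d. dpair2 (\<delta> w) (\<lambda>i j. dpair (\<mu> b c1) (\<lambda>z. dpair y (\<lambda>k. dpair (\<mu> i k) (\<lambda>m. dpair (\<sigma> j) (\<lambda>n. dpair (\<mu> m n) (\<lambda>k'. dpair (\<mu> a k') (\<lambda>m'. dpair (\<mu> m' d) (\<lambda>t. dpair (\<mu> z c) q * \<phi> t))))))))))))"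
    by (subst dpair_dpair2_swap[symmetric], subst dpair_dpair2_swap[symmetric]) (rule refl)
  also have "\<dots> = dpair2 R (\<lambda>c w. dpair2 R (\<lambda>a b. dpair2 R (\<lambda>c1 d. dpair2 (\<delta> w) (\<lambda>i j. dpair (\<mu> b c1) (\<lambda>z. dpair y (\<lambda>k. dpair (\<mu> i k) (\<lambda>m. dpair (\<sigma> j) (\<lambda>n. dpair (\<mu> m n) (\<lambda>k'. dpair (\<mu> a k') (\<lambda>m'. dpair (\<mu> m' d) (\<lambda>t. dpair (\<mu> z c) q * \<phi> t)))))))))))"
    by (rule sum_dpair_eq_dpair2)
  also have "\<dots> = dpair2 R (\<lambda>c w. dpair2 (\<delta> w) (\<lambda>i j. dpair2 R (\<lambda>a b. dpair2 R (\<lambda>c1 d. dpair (\<mu> b c1) (\<lambda>z. dpair y (\<lambda>k. dpair (\<mu> i k) (\<lambda>m. dpair (\<sigma> j) (\<lambda>n. dpair (\<mu> m n) (\<lambda>k'. dpair (\<mu> a k') (\<lambda>m'. dpair (\<mu> m' d) (\<lambda>t. dpair (\<mu> z c) q * \<phi> t)))))))))))"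
    by (subst (3) dpair2_swap, subst (2) dpair2_swap) (rule refl)
  also have "\<dots> = dpair2 R (\<lambda>x1 x2. dpair2 R (\<lambda>s1 s2. dpair (\<mu> x1 s1) (\<lambda>c. dpair2 R (\<lambda>a b. dpair2 R (\<lambda>c1 d. dpair (\<mu> b c1) (\<lambda>z. dpair y (\<lambda>k. dpair (\<mu> s2 k) (\<lambda>m. dpair (\<sigma> x2) (\<lambda>n. dpair (\<mu> m n) (\<lambda>k'. dpair (\<mu> a k') (\<lambda>m'. dpair (\<mu> m' d) (\<lambda>t. dpair (\<mu> z c) q * \<phi> t))))))))))))"
    by (rule R_comul_right)
  also have "\<dots> = dpair2 R (\<lambda>x1 x2. dpair2 R (\<lambda>s1 s2. dpair2 R (\<lambda>a b. dpair2 R (\<lambda>c1 d. dpair (\<mu> x1 s1) (\<lambda>c. dpair (\<mu> b c1) (\<lambda>z. dpair y (\<lambda>k. dpair (\<mu> s2 k) (\<lambda>m. dpair (\<sigma> x2) (\<lambda>n. dpair (\<mu> m n) (\<lambda>k'. dpair (\<mu> a k') (\<lambda>m'. dpair (\<mu> m' d) (\<lambda>t. dpair (\<mu> z c) q * \<phi> t))))))))))))"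
    by (simp only: dpair_dpair2_swap)
  also have "\<dots> = dpair2 R (\<lambda>a b. dpair2 R (\<lambda>s1 s2. dpair2 R (\<lambda>c1 d. dpair2 R (\<lambda>x1 x2. dpair (\<mu> x1 s1) (\<lambda>c. dpair (\<mu> b c1) (\<lambda>z. dpair y (\<lambda>k. dpair (\<mu> s2 k) (\<lambda>m. dpair (\<sigma> x2) (\<lambda>n. dpair (\<mu> m n) (\<lambda>k'. dpair (\<mu> a k') (\<lambda>m'. dpair (\<mu> m' d) (\<lambda>t. dpair (\<mu> z c) q * \<phi> t))))))))))))"
    by (subst (2) dpair2_swap, subst (1) dpair2_swap, subst (2) dpair2_swap, subst (3) dpair2_swap) (rule refl)
  also have "\<dots> = dpair2 R (\<lambda>a b. dpair2 R (\<lambda>s1 s2. dpair2 R (\<lambda>c1 d. dpair2 R (\<lambda>x1 x2. dpair (\<mu> c1 x1) (\<lambda>i. dpair (\<sigma> x2) (\<lambda>z. dpair (\<mu> z d) (\<lambda>j. dpair (\<mu> b i) (\<lambda>t. dpair (\<mu> t s1) q) * dpair y (\<lambda>k. dpair (\<mu> s2 k) (\<lambda>m. dpair (\<mu> m j) (\<lambda>k'. dpair (\<mu> a k') \<phi>))))))))))"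
    by (simp only: mu_assoc_sandwich_ad)
  also have "\<dots> = dpair2 R (\<lambda>a b. dpair2 R (\<lambda>s1 s2. dpair \<eta> (\<lambda>i. dpair \<eta> (\<lambda>j. dpair (\<mu> b i) (\<lambda>t. dpair (\<mu> t s1) q) * dpair y (\<lambda>k. dpair (\<mu> s2 k) (\<lambda>m. dpair (\<mu> m j) (\<lambda>k'. dpair (\<mu> a k') \<phi>)))))))"
    by (simp only: R_antipode_R)
  also have "\<dots> = dpair2 R (\<lambda>a b. dpair2 R (\<lambda>s1 s2. dpair (\<mu> b s1) q * dpair y (\<lambda>k. dpair (\<mu> s2 k) (\<lambda>m. dpair (\<mu> a m) \<phi>))))"
    by (simp only: dpair_dpair_product mu_unit_right mu_unit_right_nested)
  finally show ?thesis .
qed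

(* R c is the second leg of R against e\<^sub>c, i.e. R = \<Sum>\<^sub>c e\<^sub>c \<otimes> R c *)
lemma hmul_drinfeld_eq_sum_R_sandwich: "hmul H (fQ q) y = (\<lambda>l. \<Sum>c\<in>UNIV. R_sandwich (ad H (R c) y) (\<lambda>m. dpair (\<mu> m c) q) l)"
proof (rule dpair_ext)
  fix \<phi>
  have "dpair (hmul H (fQ q) y) \<phi> = dpair2 R (\<lambda>b a. dpair2 R (\<lambda>c d. dpair (\<mu> a c) q * dpair (\<mu> b d) (\<lambda>j. dpair y (\<lambda>b'. dpair (\<mu> j b') \<phi>))))"
    by (simp only: dpair_hmul dpair_drinfeld_expand dpair_dpair_product)
  also have "\<dots> = dpair2 R (\<lambda>b a. dpair2 R (\<lambda>c d. dpair (\<mu> a c) q * dpair y (\<lambda>b'. dpair (\<mu> b d) (\<lambda>j. dpair (\<mu> j b') \<phi>))))"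
    by (subst dpair_swap) (rule refl)
  also have "\<dots> = dpair2 R (\<lambda>b a. dpair2 R (\<lambda>c d. dpair (\<mu> a c) q * dpair y (\<lambda>b'. dpair (\<mu> d b') (\<lambda>j. dpair (\<mu> b j) \<phi>))))"
    by (simp only: mu_assoc)
  also have "\<dots> = dpair (\<lambda>l. \<Sum>c\<in>UNIV. R_sandwich (ad H (R c) y) (\<lambda>m. dpair (\<mu> m c) q) l) \<phi>"
    by (rule dpair_sum_R_sandwich_ad[symmetric])
  finally show "dpair (hmul H (fQ q) y) \<phi> = dpair (\<lambda>l. \<Sum>c\<in>UNIV. R_sandwich (ad H (R c) y) (\<lambda>m. dpair (\<mu> m c) q) l) \<phi>" .
qed

(* Q \<Delta>(h) = \<Delta>(h) Q: move \<Delta>(h) past R, then past R\<^sub>2\<^sub>1 *)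
lemma Qpair_comul_commute: "dpair2 (\<delta> l) (\<lambda>x1 x2. Qpair (\<lambda>q1 q2. dpair (\<mu> q1 x1) A * dpair (\<mu> q2 x2) B))
  = dpair2 (\<delta> l) (\<lambda>x1 x2. Qpair (\<lambda>q1 q2. dpair (\<mu> x1 q1) A * dpair (\<mu> x2 q2) B))"
proof -
  have c01: "dpair2 (\<delta> l) (\<lambda>x1 x2. Qpair (\<lambda>q1 q2. dpair (\<mu> x1 q1) A * dpair (\<mu> x2 q2) B))
    = dpair2 (\<delta> l) (\<lambda>x1 x2. dpair2 R (\<lambda>b a. dpair2 R (\<lambda>c d. dpair (\<mu> x1 a) (\<lambda>y. dpair (\<mu> y c) A) * dpair (\<mu> x2 b) (\<lambda>z. dpair (\<mu> z d) B))))"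
    unfolding Qpair_expand by (simp only: dpair_dpair_product mu_assoc)
  have c12: "dpair2 (\<delta> l) (\<lambda>x1 x2. dpair2 R (\<lambda>b a. dpair (\<mu> x2 b) (\<lambda>i. dpair (\<mu> x1 a) (\<lambda>j. dpair2 R (\<lambda>c d. dpair (\<mu> j c) A * dpair (\<mu> i d) B)))))
    = dpair2 (\<delta> l) (\<lambda>x1 x2. dpair2 R (\<lambda>b a. dpair2 R (\<lambda>c d. dpair (\<mu> x1 a) (\<lambda>y. dpair (\<mu> y c) A) * dpair (\<mu> x2 b) (\<lambda>z. dpair (\<mu> z d) B))))"
    by (simp only: dpair_dpair2_swap dpair_dpair_product_swap)
  have c23: "dpair2 (\<delta> l) (\<lambda>x1 x2. dpair2 R (\<lambda>b a. dpair (\<mu> x2 b) (\<lambda>i. dpair (\<mu> x1 a) (\<lambda>j. dpair2 R (\<lambda>c d. dpair (\<mu> j c) A * dpair (\<mu> i d) B)))))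
    = dpair2 R (\<lambda>a' b'. dpair2 (\<delta> l) (\<lambda>x1 x2. dpair (\<mu> a' x1) (\<lambda>i. dpair (\<mu> b' x2) (\<lambda>j. dpair2 R (\<lambda>c d. dpair (\<mu> j c) A * dpair (\<mu> i d) B)))))"
    by (rule R_comul_commute)
  have c34: "dpair2 R (\<lambda>a' b'. dpair2 (\<delta> l) (\<lambda>x1 x2. dpair (\<mu> a' x1) (\<lambda>i. dpair (\<mu> b' x2) (\<lambda>j. dpair2 R (\<lambda>c d. dpair (\<mu> j c) A * dpair (\<mu> i d) B)))))
    = dpair2 R (\<lambda>a' b'. dpair2 (\<delta> l) (\<lambda>x1 x2. dpair2 R (\<lambda>c d. dpair (\<mu> x2 c) (\<lambda>i. dpair (\<mu> x1 d) (\<lambda>j. dpair (\<mu> b' i) A * dpair (\<mu> a' j) B)))))"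
    by (simp only: dpair_dpair2_swap dpair_dpair_product_swap dpair_dpair_product mu_assoc)
  have c45: "dpair2 R (\<lambda>a' b'. dpair2 (\<delta> l) (\<lambda>x1 x2. dpair2 R (\<lambda>c d. dpair (\<mu> x2 c) (\<lambda>i. dpair (\<mu> x1 d) (\<lambda>j. dpair (\<mu> b' i) A * dpair (\<mu> a' j) B)))))
    = dpair2 (\<delta> l) (\<lambda>x1 x2. dpair2 R (\<lambda>c d. dpair2 R (\<lambda>a' b'. dpair (\<mu> x2 c) (\<lambda>i. dpair (\<mu> x1 d) (\<lambda>j. dpair (\<mu> b' i) A * dpair (\<mu> a' j) B)))))"
    by (subst dpair2_swap, subst (2) dpair2_swap) (rule refl)
  have c55: "dpair2 (\<delta> l) (\<lambda>x1 x2. dpair2 R (\<lambda>c d. dpair (\<mu> x2 c) (\<lambda>i. dpair (\<mu> x1 d) (\<lambda>j. dpair2 R (\<lambda>a' b'. dpair (\<mu> b' i) A * dpair (\<mu> a' j) B)))))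
    = dpair2 (\<delta> l) (\<lambda>x1 x2. dpair2 R (\<lambda>c d. dpair2 R (\<lambda>a' b'. dpair (\<mu> x2 c) (\<lambda>i. dpair (\<mu> x1 d) (\<lambda>j. dpair (\<mu> b' i) A * dpair (\<mu> a' j) B)))))"
    by (simp only: dpair_dpair2_swap)
  have c56: "dpair2 (\<delta> l) (\<lambda>x1 x2. dpair2 R (\<lambda>c d. dpair (\<mu> x2 c) (\<lambda>i. dpair (\<mu> x1 d) (\<lambda>j. dpair2 R (\<lambda>a' b'. dpair (\<mu> b' i) A * dpair (\<mu> a' j) B)))))
    = dpair2 R (\<lambda>c d. dpair2 (\<delta> l) (\<lambda>x1 x2. dpair (\<mu> c x1) (\<lambda>i. dpair (\<mu> d x2) (\<lambda>j. dpair2 R (\<lambda>a' b'. dpair (\<mu> b' i) A * dpair (\<mu> a' j) B)))))"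
    by (rule R_comul_commute)
  have c67: "dpair2 R (\<lambda>c d. dpair2 (\<delta> l) (\<lambda>x1 x2. dpair (\<mu> c x1) (\<lambda>i. dpair (\<mu> d x2) (\<lambda>j. dpair2 R (\<lambda>a' b'. dpair (\<mu> b' i) A * dpair (\<mu> a' j) B)))))
    = dpair2 R (\<lambda>c d. dpair2 (\<delta> l) (\<lambda>x1 x2. dpair2 R (\<lambda>a' b'. dpair (\<mu> c x1) (\<lambda>i. dpair (\<mu> b' i) A) * dpair (\<mu> d x2) (\<lambda>j. dpair (\<mu> a' j) B))))"
    by (simp only: dpair_dpair2_swap dpair_dpair_product)
  have c78: "dpair2 R (\<lambda>c d. dpair2 (\<delta> l) (\<lambda>x1 x2. dpair2 R (\<lambda>a' b'. dpair (\<mu> c x1) (\<lambda>i. dpair (\<mu> b' i) A) * dpair (\<mu> d x2) (\<lambda>j. dpair (\<mu> a' j) B))))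
    = dpair2 (\<delta> l) (\<lambda>x1 x2. dpair2 R (\<lambda>a' b'. dpair2 R (\<lambda>c d. dpair (\<mu> c x1) (\<lambda>i. dpair (\<mu> b' i) A) * dpair (\<mu> d x2) (\<lambda>j. dpair (\<mu> a' j) B))))"
    by (subst dpair2_swap, subst (2) dpair2_swap) (rule refl)
  have c8: "dpair2 (\<delta> l) (\<lambda>x1 x2. Qpair (\<lambda>q1 q2. dpair (\<mu> q1 x1) A * dpair (\<mu> q2 x2) B))
    = dpair2 (\<delta> l) (\<lambda>x1 x2. dpair2 R (\<lambda>a' b'. dpair2 R (\<lambda>c d. dpair (\<mu> c x1) (\<lambda>i. dpair (\<mu> b' i) A) * dpair (\<mu> d x2) (\<lambda>j. dpair (\<mu> a' j) B))))"
    unfolding Qpair_expand by (simp only: dpair_dpair_product mu_assoc)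
  show ?thesis using c01 c12 c23 c34 c45 c55 c56 c67 c78 c8 by simp
qed

(* coad h p = p(S(h\<^sub>1) \<cdot> h\<^sub>2) *)
definition coad :: "('i \<Rightarrow> 'a) \<Rightarrow> ('i \<Rightarrow> 'a) \<Rightarrow> 'i \<Rightarrow> 'a" where
  "coad h p = (\<lambda>x. dpair h (\<lambda>w. dpair2 (\<delta> w) (\<lambda>i j. dpair (\<sigma> i) (\<lambda>s. dpair (\<mu> s x) (\<lambda>z. dpair (\<mu> z j) p)))))"

lemma Qpair_coad_exchange: "dpair2 (\<delta> w) (\<lambda>i j. Qpair (\<lambda>q1 q2. dpair (\<sigma> i) (\<lambda>s. dpair (\<mu> s q1) (\<lambda>z. dpair (\<mu> z j) p)) * \<phi> q2))
  = dpair2 (\<delta> w) (\<lambda>i j. Qpair (\<lambda>q1 q2. p q1 * dpair (\<mu> i q2) (\<lambda>m. dpair (\<sigma> j) (\<lambda>n. dpair (\<mu> m n) \<phi>))))"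
proof -
  have "dpair2 (\<delta> w) (\<lambda>i j. Qpair (\<lambda>q1 q2. dpair (\<sigma> i) (\<lambda>s. dpair (\<mu> s q1) (\<lambda>z. dpair (\<mu> z j) p)) * \<phi> q2))
     = dpair2 (\<delta> w) (\<lambda>i m. dpair2 (\<delta> m) (\<lambda>j k. Qpair (\<lambda>q1 q2. dpair (\<sigma> i) (\<lambda>s. dpair (\<mu> s q1) (\<lambda>z. dpair (\<mu> z j) p)) * \<phi> q2) * \<epsilon> k))"
    by (simp only: dl_counit_right)
  also have "\<dots> = dpair2 (\<delta> w) (\<lambda>i m. dpair2 (\<delta> m) (\<lambda>j k. Qpair (\<lambda>q1 q2. dpair (\<sigma> i) (\<lambda>s. dpair (\<mu> s q1) (\<lambda>z. dpair (\<mu> z j) p)) * dpair2 (\<delta> k) (\<lambda>a j'. dpair (\<sigma> j') (\<lambda>b. dpair (\<mu> a b) (\<lambda>m'. dpair (\<mu> q2 m') \<phi>))))))"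
    by (simp only: antipode_right mu_unit_right Qpair_mult_const[symmetric] Qpair_const_mult[symmetric] mult_ac)
  also have "\<dots> = dpair2 (\<delta> w) (\<lambda>i m. dpair2 (\<delta> m) (\<lambda>j k. dpair2 (\<delta> k) (\<lambda>a j'. Qpair (\<lambda>q1 q2. dpair (\<sigma> i) (\<lambda>s. dpair (\<mu> s q1) (\<lambda>z. dpair (\<mu> z j) p)) * dpair (\<sigma> j') (\<lambda>b. dpair (\<mu> a b) (\<lambda>m'. dpair (\<mu> q2 m') \<phi>))))))"
    by (simp only: dpair2_const_mult[symmetric] Qpair_dpair2)
  also have "\<dots> = dpair2 (\<delta> w) (\<lambda>i m. dpair2 (\<delta> m) (\<lambda>g j'. dpair2 (\<delta> g) (\<lambda>j a. Qpair (\<lambda>q1 q2. dpair (\<sigma> i) (\<lambda>s. dpair (\<mu> s q1) (\<lambda>z. dpair (\<mu> z j) p)) * dpair (\<sigma> j') (\<lambda>b. dpair (\<mu> a b) (\<lambda>m'. dpair (\<mu> q2 m') \<phi>))))))"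
    by (subst (2) dl_coassoc[symmetric]) (rule refl)
  also have "\<dots> = dpair2 (\<delta> w) (\<lambda>i m. dpair2 (\<delta> m) (\<lambda>g j'. dpair2 (\<delta> g) (\<lambda>j a. Qpair (\<lambda>q1 q2. dpair (\<mu> q1 j) (\<lambda>z. dpair (\<sigma> i) (\<lambda>s. dpair (\<mu> s z) p)) * dpair (\<mu> q2 a) (\<lambda>z. dpair (\<sigma> j') (\<lambda>b. dpair (\<mu> z b) \<phi>))))))"
    by (simp only: mu_assoc_lincomb_left mu_assoc_lincomb_right)
  also have "\<dots> = dpair2 (\<delta> w) (\<lambda>i m. dpair2 (\<delta> m) (\<lambda>g j'. dpair2 (\<delta> g) (\<lambda>j a. Qpair (\<lambda>q1 q2. dpair (\<mu> j q1) (\<lambda>z. dpair (\<sigma> i) (\<lambda>s. dpair (\<mu> s z) p)) * dpair (\<mu> a q2) (\<lambda>z. dpair (\<sigma> j') (\<lambda>b. dpair (\<mu> z b) \<phi>))))))"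
    by (simp only: Qpair_comul_commute)
  finally have Rr: "dpair2 (\<delta> w) (\<lambda>i j. Qpair (\<lambda>q1 q2. dpair (\<sigma> i) (\<lambda>s. dpair (\<mu> s q1) (\<lambda>z. dpair (\<mu> z j) p)) * \<phi> q2)) = \<dots>" .
  have "dpair2 (\<delta> w) (\<lambda>i j. Qpair (\<lambda>q1 q2. p q1 * dpair (\<mu> i q2) (\<lambda>m. dpair (\<sigma> j) (\<lambda>n. dpair (\<mu> m n) \<phi>))))
     = dpair2 (\<delta> w) (\<lambda>m j. dpair2 (\<delta> m) (\<lambda>k i. \<epsilon> k * Qpair (\<lambda>q1 q2. p q1 * dpair (\<mu> i q2) (\<lambda>m. dpair (\<sigma> j) (\<lambda>n. dpair (\<mu> m n) \<phi>)))))"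
    by (simp only: dl_counit_left)
  also have "\<dots> = dpair2 (\<delta> w) (\<lambda>k m. dpair2 (\<delta> m) (\<lambda>i j. \<epsilon> k * Qpair (\<lambda>q1 q2. p q1 * dpair (\<mu> i q2) (\<lambda>m. dpair (\<sigma> j) (\<lambda>n. dpair (\<mu> m n) \<phi>)))))"
    by (rule dl_coassoc)
  also have "\<dots> = dpair2 (\<delta> w) (\<lambda>k m. dpair2 (\<delta> m) (\<lambda>i j. Qpair (\<lambda>q1 q2. dpair2 (\<delta> k) (\<lambda>i0 b. dpair (\<sigma> i0) (\<lambda>a. dpair (\<mu> a b) (\<lambda>m'. dpair (\<mu> m' q1) p))) * dpair (\<mu> i q2) (\<lambda>m. dpair (\<sigma> j) (\<lambda>n. dpair (\<mu> m n) \<phi>)))))"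
    by (simp only: antipode_left mu_unit_left Qpair_mult_const[symmetric] Qpair_const_mult[symmetric] mult_ac)
  also have "\<dots> = dpair2 (\<delta> w) (\<lambda>k m. dpair2 (\<delta> m) (\<lambda>i j. dpair2 (\<delta> k) (\<lambda>i0 b. Qpair (\<lambda>q1 q2. dpair (\<sigma> i0) (\<lambda>a. dpair (\<mu> a b) (\<lambda>m'. dpair (\<mu> m' q1) p)) * dpair (\<mu> i q2) (\<lambda>m. dpair (\<sigma> j) (\<lambda>n. dpair (\<mu> m n) \<phi>))))))"
    by (simp only: dpair2_mult_const[symmetric] Qpair_dpair2)
  also have "\<dots> = dpair2 (\<delta> w) (\<lambda>k m. dpair2 (\<delta> k) (\<lambda>i0 b. dpair2 (\<delta> m) (\<lambda>i j. Qpair (\<lambda>q1 q2. dpair (\<sigma> i0) (\<lambda>a. dpair (\<mu> a b) (\<lambda>m'. dpair (\<mu> m' q1) p)) * dpair (\<mu> i q2) (\<lambda>m. dpair (\<sigma> j) (\<lambda>n. dpair (\<mu> m n) \<phi>))))))"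
    by (subst (2) dpair2_swap) (rule refl)
  also have "\<dots> = dpair2 (\<delta> w) (\<lambda>i0 n. dpair2 (\<delta> n) (\<lambda>b m. dpair2 (\<delta> m) (\<lambda>i j. Qpair (\<lambda>q1 q2. dpair (\<sigma> i0) (\<lambda>a. dpair (\<mu> a b) (\<lambda>m'. dpair (\<mu> m' q1) p)) * dpair (\<mu> i q2) (\<lambda>m. dpair (\<sigma> j) (\<lambda>n. dpair (\<mu> m n) \<phi>))))))"
    by (rule dl_coassoc)
  also have "\<dots> = dpair2 (\<delta> w) (\<lambda>i0 n. dpair2 (\<delta> n) (\<lambda>g j. dpair2 (\<delta> g) (\<lambda>b i. Qpair (\<lambda>q1 q2. dpair (\<sigma> i0) (\<lambda>a. dpair (\<mu> a b) (\<lambda>m'. dpair (\<mu> m' q1) p)) * dpair (\<mu> i q2) (\<lambda>m. dpair (\<sigma> j) (\<lambda>n. dpair (\<mu> m n) \<phi>))))))"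
    by (subst (2) dl_coassoc[symmetric]) (rule refl)
  also have "\<dots> = dpair2 (\<delta> w) (\<lambda>i0 n. dpair2 (\<delta> n) (\<lambda>g j. dpair2 (\<delta> g) (\<lambda>b i. Qpair (\<lambda>q1 q2. dpair (\<mu> b q1) (\<lambda>z. dpair (\<sigma> i0) (\<lambda>s. dpair (\<mu> s z) p)) * dpair (\<mu> i q2) (\<lambda>m. dpair (\<sigma> j) (\<lambda>n. dpair (\<mu> m n) \<phi>))))))"
    by (simp only: mu_assoc_lincomb_left)
  finally have Ll: "dpair2 (\<delta> w) (\<lambda>i j. Qpair (\<lambda>q1 q2. p q1 * dpair (\<mu> i q2) (\<lambda>m. dpair (\<sigma> j) (\<lambda>n. dpair (\<mu> m n) \<phi>)))) = \<dots>" .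
  show ?thesis unfolding Ll Rr ..
qed

lemma ad_drinfeld: "ad H h (fQ p) = fQ (coad h p)"
proof (rule dpair_ext)
  fix \<phi>
  have "dpair (fQ (coad h p)) \<phi> = dpair h (\<lambda>w. dpair2 (\<delta> w) (\<lambda>i j. Qpair (\<lambda>q1 q2. dpair (\<sigma> i) (\<lambda>s. dpair (\<mu> s q1) (\<lambda>z. dpair (\<mu> z j) p)) * \<phi> q2)))"
    unfolding dpair_drinfeld coad_def by (simp only: dpair_mult_const[symmetric] dpair2_mult_const[symmetric] Qpair_dpair Qpair_dpair2)
  also have "\<dots> = dpair h (\<lambda>w. dpair2 (\<delta> w) (\<lambda>i j. Qpair (\<lambda>q1 q2. p q1 * dpair (\<mu> i q2) (\<lambda>m. dpair (\<sigma> j) (\<lambda>n. dpair (\<mu> m n) \<phi>)))))"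
    by (simp only: Qpair_coad_exchange)
  also have "\<dots> = dpair (ad H h (fQ p)) \<phi>"
    by (simp only: dpair_ad dpair_drinfeld)
  finally show "dpair (ad H h (fQ p)) \<phi> = dpair (fQ (coad h p)) \<phi>" ..
qed

(* comul_leg k p x = \<Sum> (R\<^sup>1 r\<^sup>2)\<^sub>k p(R\<^sup>2 x r\<^sup>1) *)
definition comul_leg :: "'i \<Rightarrow> ('i \<Rightarrow> 'a) \<Rightarrow> 'i \<Rightarrow> 'a" where
  "comul_leg k p = (\<lambda>m. dpair2 R (\<lambda>r1 r2. dpair2 R (\<lambda>u1 u2. \<mu> r1 u2 k * dpair (\<mu> r2 m) (\<lambda>z. dpair (\<mu> z u1) p))))"

lemma hcomul_drinfeld_row: "(\<lambda>j. hcomul H (fQ p) k j) = fQ (comul_leg k p)"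
proof (rule dpair_ext)
  fix \<phi>
  have "dpair (\<lambda>j. hcomul H (fQ p) k j) \<phi> = dpair2 R (\<lambda>b a. dpair2 R (\<lambda>c d. dpair (\<mu> a c) p * dpair (\<mu> b d) (\<lambda>l. dpair2 (\<delta> l) (\<lambda>x y. bvec k x * \<phi> y))))"
    by (simp only: dpair_row[of "hcomul H (fQ p)"] dpair2_hcomul dpair_drinfeld_expand dpair_dpair_product)
  also have "\<dots> = dpair2 R (\<lambda>b a. dpair2 R (\<lambda>c d. dpair (\<mu> a c) p * dpair2 (\<delta> b) (\<lambda>p' q'. dpair2 (\<delta> d) (\<lambda>r s. dpair (\<mu> p' r) (\<lambda>x. dpair (\<mu> q' s) (\<lambda>y. bvec k x * \<phi> y))))))"
    by (simp only: dl_mult)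
  also have "\<dots> = dpair2 R (\<lambda>b a. dpair2 R (\<lambda>c d. dpair2 (\<delta> b) (\<lambda>p' q'. dpair2 (\<delta> d) (\<lambda>r s. dpair (\<mu> a c) p * (\<mu> p' r k * dpair (\<mu> q' s) \<phi>)))))"
    by (simp only: dpair2_const_mult[symmetric] dpair_dpair_product dpair_bvec_right)
  also have "\<dots> = dpair2 R (\<lambda>b a. dpair2 (\<delta> b) (\<lambda>p' q'. dpair2 R (\<lambda>c d. dpair2 (\<delta> d) (\<lambda>r s. dpair (\<mu> a c) p * (\<mu> p' r k * dpair (\<mu> q' s) \<phi>)))))"
    by (subst (2) dpair2_swap) (rule refl)
  also have "\<dots> = dpair2 R (\<lambda>i c0. dpair2 R (\<lambda>j c0'. dpair (\<mu> c0 c0') (\<lambda>a. dpair2 R (\<lambda>c d. dpair2 (\<delta> d) (\<lambda>r s. dpair (\<mu> a c) p * (\<mu> i r k * dpair (\<mu> j s) \<phi>))))))"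
    by (rule R_comul_left)
  also have "\<dots> = dpair2 R (\<lambda>i c0. dpair2 R (\<lambda>j c0'. dpair2 R (\<lambda>c d. dpair2 (\<delta> d) (\<lambda>r s. dpair (\<mu> c0 c0') (\<lambda>a. dpair (\<mu> a c) p * (\<mu> i r k * dpair (\<mu> j s) \<phi>))))))"
    by (simp only: dpair_dpair2_swap)
  also have "\<dots> = dpair2 R (\<lambda>i c0. dpair2 R (\<lambda>j c0'. dpair2 R (\<lambda>a2 k2. dpair2 R (\<lambda>a2' j2. dpair (\<mu> a2 a2') (\<lambda>c. dpair (\<mu> c0 c0') (\<lambda>a. dpair (\<mu> a c) p * (\<mu> i j2 k * dpair (\<mu> j k2) \<phi>)))))))"
    by (simp only: R_comul_right)
  also have "\<dots> = dpair2 R (\<lambda>j c0'. dpair2 R (\<lambda>a2 k2. dpair2 R (\<lambda>i c0. dpair2 R (\<lambda>a2' j2. dpair (\<mu> a2 a2') (\<lambda>c. dpair (\<mu> c0 c0') (\<lambda>a. dpair (\<mu> a c) p * (\<mu> i j2 k * dpair (\<mu> j k2) \<phi>)))))))"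
    by (subst (1) dpair2_swap, subst (2) dpair2_swap) (rule refl)
  finally have Ll: "dpair (\<lambda>j. hcomul H (fQ p) k j) \<phi> = \<dots>" .
  have "dpair (fQ (comul_leg k p)) \<phi> = dpair2 R (\<lambda>b a. dpair2 R (\<lambda>c d. dpair (\<mu> a c) (comul_leg k p) * dpair (\<mu> b d) \<phi>))"
    by (simp only: dpair_drinfeld_expand dpair_dpair_product)
  also have "\<dots> = dpair2 R (\<lambda>b a. dpair2 R (\<lambda>c d. dpair2 R (\<lambda>r1 r2. dpair2 R (\<lambda>u1 u2. \<mu> r1 u2 k * dpair (\<mu> a c) (\<lambda>m. dpair (\<mu> r2 m) (\<lambda>z. dpair (\<mu> z u1) p)) * dpair (\<mu> b d) \<phi>))))"
    unfolding comul_leg_def by (simp only: dpair_dpair2_swap dpair_const_mult dpair2_mult_const[symmetric])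
  finally have Rr: "dpair (fQ (comul_leg k p)) \<phi> = \<dots>" .
  show "dpair (\<lambda>j. hcomul H (fQ p) k j) \<phi> = dpair (fQ (comul_leg k p)) \<phi>"
    unfolding Ll Rr by (simp only: dpair_const_mult dpair_mult_const mu_assoc mult_ac)
qed

lemma subcoalgebra_right_translate_mem:
  assumes C: "subcoalgebra_dual H C" and q: "q \<in> C"
  shows "(\<lambda>m. dpair (\<mu> m c) q) \<in> C"
proof -
  have sub: "subspace C" using C unfolding subcoalgebra_dual_def by blast
  have "(\<lambda>m. dpair \<eta> (\<lambda>x. dpair (\<mu> x m) (\<lambda>z. dpair (\<mu> z c) q))) \<in> C"
    by (intro dpair_mem[OF sub] subcoalgebra_translate_mem[OF C q])
  then show ?thesis by (simp only: mu_unit_left)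
qed

lemma subcoalgebra_coad_mem:
  assumes C: "subcoalgebra_dual H C" and p: "p \<in> C"
  shows "coad h p \<in> C"
proof -
  have sub: "subspace C" using C unfolding subcoalgebra_dual_def by blast
  show ?thesis unfolding coad_def
    by (intro dpair_mem[OF sub] dpair2_mem[OF sub] subcoalgebra_translate_mem[OF C p])
qed

lemma subcoalgebra_comul_leg_mem:
  assumes C: "subcoalgebra_dual H C" and p: "p \<in> C"
  shows "comul_leg k p \<in> C"
proof -
  have sub: "subspace C" using C unfolding subcoalgebra_dual_def by blast
  show ?thesis unfolding comul_leg_def
    by (intro dpair2_mem[OF sub] const_mult_mem[OF sub] subcoalgebra_translate_mem[OF C p])
qed

lemma drinfeld_subcoalgebra:
  assumes C: "subcoalgebra_dual H C"
  shows "left_coideal H (fQ ` C) \<and> ad_stable H (fQ ` C)"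
proof
  have "subspace C"
    using C unfolding subcoalgebra_dual_def by blast
  then show "left_coideal H (fQ ` C)"
    unfolding left_coideal_def
    using subspace_drinfeld_image hcomul_drinfeld_row subcoalgebra_comul_leg_mem[OF C]
    by (auto intro!: in_tensor_UNIV_rows)
  show "ad_stable H (fQ ` C)"
    unfolding ad_stable_def using ad_drinfeld subcoalgebra_coad_mem[OF C] by blast
qed

lemma drinfeld_hopf_subalgebra:
  assumes A: "hopf_subalgebra_dual H A"
  shows "normal_lcs H (fQ ` A)"
proof -
  have C: "subcoalgebra_dual H A"
    using A unfolding hopf_subalgebra_dual_def by blast
  have sub: "subspace (fQ ` A)"
    using C subspace_drinfeld_image unfolding subcoalgebra_dual_def by blast
  have coideal: "left_coideal H (fQ ` A) \<and> ad_stable H (fQ ` A)"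
    by (rule drinfeld_subcoalgebra[OF C])
  have one: "\<eta> \<in> fQ ` A"
    using A drinfeld_ep unfolding hopf_subalgebra_dual_def by (metis image_eqI)
  have mult: "hmul H (fQ q) y \<in> fQ ` A" if q: "q \<in> A" and y: "y \<in> fQ ` A" for q y
  proof -
    have "\<forall>c. \<exists>p. p \<in> A \<and> ad H (R c) y = fQ p"
      using coideal y unfolding ad_stable_def by blast
    then obtain p where p: "\<And>c. p c \<in> A" "\<And>c. ad H (R c) y = fQ (p c)"
      by metis
    let ?r = "\<lambda>c. dmul H (p c) (\<lambda>m. dpair (\<mu> m c) q)"
    have "hmul H (fQ q) y = (\<lambda>l. \<Sum>c\<in>UNIV. 1 * fQ (?r c) l)"
      unfolding hmul_drinfeld_eq_sum_R_sandwich p(2) drinfeld_dmul[symmetric] by simp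
    moreover have "fQ (?r c) \<in> fQ ` A" for c
      using A p(1) subcoalgebra_right_translate_mem[OF C q] unfolding hopf_subalgebra_dual_def by blast
    ultimately show ?thesis
      using sum_lincomb_mem[OF sub finite_UNIV, of "\<lambda>c. fQ (?r c)" "\<lambda>_. 1"] by simp
  qed
  show ?thesis
    unfolding normal_lcs_def left_coideal_subalgebra_def using coideal one mult by blast
qed

end

theorem lemma4p1:
  fixes H :: "('i::finite, 'a::field) hopf_data" and R :: "'i \<Rightarrow> 'i \<Rightarrow> 'a"
  assumes "hopf_algebra H" and "semisimple H" and "quasitriangular H R"
  shows "(\<forall>C. subcoalgebra_dual H C \<longrightarrow>
            left_coideal H (drinfeld H R ` C) \<and> ad_stable H (drinfeld H R ` C)) \<and>
         (\<forall>A. hopf_subalgebra_dual H A \<longrightarrow> normal_lcs H (drinfeld H R ` A))"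
proof -
  interpret quasitriangular_hopf H R using assms(1,3) by unfold_locales
  show ?thesis using drinfeld_subcoalgebra drinfeld_hopf_subalgebra by blast
qed

end
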